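(* In the matrix model described in the context, suppose the matrix noise assumption holds, and let $\mathcal E$ be the event on which all of the following hold: (i) for all $0\le k\le\log m$: $\|[\mathcal P_{\sf off\text{-}diag}(\bm E\bm E^\top)]^k\bm E\bm V^\star\|_{2,\infty}\le C_3\sqrt{\mu r}\,(C_3(\sqrt{m_1m_2}+m_1)\omega^2_{\max}\log^2m)^k\omega_{\max}\log m$ and $\|[\mathcal P_{\sf off\text{-}diag}(\bm E\bm E^\top)]^k\bm U^\star\|_{2,\infty}\le C_3\sqrt{\mu r/m_1}\,(C_3(\sqrt{m_1m_2}+m_1)\omega^2_{\max}\log^2m)^k$; (ii) $|\widetilde\sigma_i-\sigma_i^\star|\le\|\bm E\bm V^{\star(1)}\|\le\|\bm E\bm V^\star\|\le\sqrt{C_5}\sqrt{m_1}\omega_{\max}\log m$ for all $i\in[\overline r]$; (iii) $\|\mathcal P_{\sf off\text{-}diag}(\bm E\bm E^\top-\bm E\bm V^\star\bm V^{\star\top}\bm E^\top)\|\le3C_5(\sqrt{m_1m_2}+m_1)\omega^2_{\max}\log^2m$; (iv) $\|\bm U^{\star(1)}\bm U^{\star(1)\top}\widetilde{\bm U}^{(1)}-\widetilde{\bm U}^{(1)}\|_{2,\infty}\le\frac{4C_5\sqrt{\mu r}\,\omega_{\max}\log m}{\sigma_r^\star}\le\sqrt{\mu r/m_1}$; (v) $\|\widetilde{\bm U}^{(1)}\|_{2,\infty}\le2\sqrt{\mu r/m_1}$. Then there exist sufficiently large constants $C_2,C_3>0$ (independent of $C_0$) such that on $\mathcal E$, for every $0\le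 i\le\log m$, $$\|\bm Z_3^i\bm U^\star\|_{2,\infty}\le3C_3\sqrt{\mu r/m_1}\,\big(C_3(\sqrt{m_1m_2}+m_1)\omega^2_{\max}\log^2m\big)^i,$$ $$\|\bm Z_3^i\bm E\bm V^\star\|_{2,\infty}\le3C_3\sqrt{\mu r}\,\big(C_3(\sqrt{m_1m_2}+m_1)\omega^2_{\max}\log^2m\big)^i\omega_{\max}\log m,$$ $$\|\bm Z_3^i\widetilde{\bm U}^{(1)}\|_{2,\infty}\le4C_3\sqrt{\mu r/m_1}\,\big(C_3(\sqrt{m_1m_2}+m_1)\omega^2_{\max}\log^2m\big)^i,$$ $$\|\bm Z_3^i\bm Z_1\|_{2,\infty}\le C_2\sqrt{\mu r}\,(\sigma^\star_{\overline r+1}+\sqrt{m_1}\omega_{\max}\log m)\big(C_3(\sqrt{m_1m_2}+m_1)\omega^2_{\max}\log^2m\big)^i\omega_{\max}\log m,$$ $$\|\bm Z_3^i\bm Z_2\|_{2,\infty}\le C_2\sqrt{\mu r}\,\big(C_3(\sqrt{m_1m_2}+m_1)\omega^2_{\max}\log^2m\big)^i\omega_{\max}\sigma^\star_{\overline r+1}\log m.$$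
   Context: Matrix model: one observes $\bm Y=\bm X^\star+\bm E\in\mathbb R^{m_1\times m_2}$, where $\bm X^\star$ has rank at most $r$ and SVD $\bm X^\star=\bm U^\star\bm\Sigma^\star\bm V^{\star\top}=\sum_{i=1}^r\sigma_i^\star\bm u_i^\star\bm v_i^{\star\top}$ with $\sigma_1^\star\ge\dots\ge\sigma_r^\star\ge0$ and orthonormal-column $\bm U^\star,\bm V^\star$; $\sigma^\star_{r+1}=0$, $m=\max\{m_1,m_2\}$, $\mu=\max\{\frac{m_1}{r}\max_i\|\bm U^\star_{i,:}\|_2^2,\frac{m_2}{r}\max_j\|\bm V^\star_{j,:}\|_2^2\}$, $\omega^2_{\max}=\max_{i,j}\mathbb E[E_{i,j}^2]$. Matrix noise assumption: entries $E_{i,j}$ independent, mean zero, $\mathbb P(|E_{i,j}|>B)\le m^{-12}$ with $B\le C_{\mathsf b}\omega_{\max}\min\{(m_1m_2)^{1/4},\sqrt{m_2}\}/\log m$, $C_{\mathsf b}$ universal. Let $C_0>0$ be a fixed (large) constant and $\mathcal A=\{j\in[r]:\sigma_j^\star\ge\frac{4r}{4r-1}\sigma^\star_{j+1}\vee C_0r[(m_1m_2)^{1/4}+rm_1^{1/2}]\omega_{\max}\log m\}$; $\overline r=\max\mathcal A$ if $\mathcal A\ne\emptyset$ and $\overline r=0$ otherwise. Let $\bm U^{\star(1)}=[\bm u^\star_1,\dots,\bm u^\star_{\overline r}]$, $\bm\Sigma^{\star(1)}=\mathrm{diag}(\sigma^\star_1,\dots,\sigma^\star_{\overline r})$, $\bm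 V^{\star(1)}=[\bm v^\star_1,\dots,\bm v^\star_{\overline r}]$, and $\bm U^{\star(2)},\bm\Sigma^{\star(2)},\bm V^{\star(2)}$ the analogous objects for indices $\overline r+1,\dots,r$. Let $\widetilde{\bm U}^{(1)}\widetilde{\bm\Sigma}^{(1)}\widetilde{\bm W}^{(1)\top}$ be the SVD of $\bm U^{\star(1)}\bm\Sigma^{\star(1)}+\bm E\bm V^{\star(1)}$ with $\widetilde{\bm\Sigma}^{(1)}=\mathrm{diag}(\widetilde\sigma_1,\dots,\widetilde\sigma_{\overline r})$. For a matrix $\bm A$ with orthonormal columns, $\mathcal P_{\bm A}=\bm A\bm A^\top$ and $\mathcal P_{\bm A_\perp}=\bm I-\bm A\bm A^\top$. $\mathcal P_{\sf diag}$ keeps diagonal entries, $\mathcal P_{\sf off\text{-}diag}=\mathrm{Id}-\mathcal P_{\sf diag}$. Define $\bm Z_1=\bm U^{\star(2)}\bm\Sigma^{\star(2)}\bm V^{\star(2)\top}\bm E^\top+\bm E\bm V^{\star(2)}\bm\Sigma^{\star(2)}\bm U^{\star(2)\top}+\bm E\bm V^{\star(2)}\bm V^{\star(2)\top}\bm E^\top$, $\bm Z_2=\mathcal P_{\widetilde{\bm U}^{(1)}}\bm U^{\star(2)}(\bm\Sigma^{\star(2)})^2\bm U^{\star(2)\top}\mathcal P_{(\widetilde{\bm U}^{(1)})_\perp}+\bm U^{\star(2)}(\bm\Sigma^{\star(2)})^2\bm U^{\star(2)\top}\mathcal P_{\widetilde{\bm U}^{(1)}}$, $\bm Z_3=\mathcal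 P_{\sf off\text{-}diag}(\bm E\bm E^\top-\bm E\bm V^\star\bm V^{\star\top}\bm E^\top)$. $\|\cdot\|$ is the spectral norm, $\|\bm A\|_{2,\infty}=\max_i\|\bm A_{i,:}\|_2$; $C_5>0$ is a fixed large constant. *)

theory Defs
  imports "HOL-Probability.Probability" "Jordan_Normal_Form.Matrix"
begin

definition vnorm :: "real vec \<Rightarrow> real" where
  "vnorm v = sqrt (v \<bullet> v)"

definition spec_norm :: "real mat \<Rightarrow> real" where
  "spec_norm A = Sup {vnorm (A *\<^sub>v v) | v. v \<in> carrier_vec (dim_col A) \<and> vnorm v \<le> 1}"

definition norm_2inf :: "real mat \<Rightarrow> real" where
  "norm_2inf A = Max (insert 0 {vnorm (row A i) | i. i < dim_row A})"

definition offdiag :: "real mat \<Rightarrow> real mat" where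
  "offdiag A = mat (dim_row A) (dim_col A) (\<lambda>(i,j). if i = j then 0 else A $$ (i,j))"

definition proj :: "real mat \<Rightarrow> real mat" where
  "proj A = A * A\<^sup>T"

definition proj_perp :: "real mat \<Rightarrow> real mat" where
  "proj_perp A = 1\<^sub>m (dim_row A) - A * A\<^sup>T"

definition orthonormal_cols :: "real mat \<Rightarrow> bool" where
  "orthonormal_cols A \<longleftrightarrow> A\<^sup>T * A = 1\<^sub>m (dim_col A)"

definition col_block :: "real mat \<Rightarrow> nat \<Rightarrow> nat \<Rightarrow> real mat" where
  "col_block A a b = mat (dim_row A) (b - a) (\<lambda>(i,j). A $$ (i, j + a))"

text \<open>Diagonal matrix diag(s (a+1), ..., s b) with 1-based singular values s.\<close>
definition sig_block :: "(nat \<Rightarrow> real) \<Rightarrow> nat \<Rightarrow> nat \<Rightarrow> real mat" where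
  "sig_block s a b = mat (b - a) (b - a) (\<lambda>(i,j). if i = j then s (i + a + 1) else 0)"

definition is_svd :: "real mat \<Rightarrow> real mat \<Rightarrow> real mat \<Rightarrow> real mat \<Rightarrow> bool" where
  "is_svd A U S W \<longleftrightarrow>
     U \<in> carrier_mat (dim_row A) (dim_col A) \<and> S \<in> carrier_mat (dim_col A) (dim_col A) \<and>
     W \<in> carrier_mat (dim_col A) (dim_col A) \<and>
     orthonormal_cols U \<and> orthonormal_cols W \<and>
     (\<forall>i<dim_col A. \<forall>j<dim_col A. i \<noteq> j \<longrightarrow> S $$ (i,j) = 0) \<and>
     (\<forall>i<dim_col A. 0 \<le> S $$ (i,i)) \<and>
     (\<forall>i j. i \<le> j \<and> j < dim_col A \<longrightarrow> S $$ (j,j) \<le> S $$ (i,i)) \<and>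
     A = U * S * W\<^sup>T"

definition incoh :: "nat \<Rightarrow> nat \<Rightarrow> nat \<Rightarrow> real mat \<Rightarrow> real mat \<Rightarrow> real" where
  "incoh m1 m2 r U V = max (real m1 / real r * Max {(vnorm (row U i))\<^sup>2 | i. i < m1})
                           (real m2 / real r * Max {(vnorm (row V j))\<^sup>2 | j. j < m2})"

text \<open>The index set A and rbar (singular values sig are 1-based, sig (r+1) = 0).\<close>
definition Aset :: "real \<Rightarrow> nat \<Rightarrow> nat \<Rightarrow> nat \<Rightarrow> real \<Rightarrow> (nat \<Rightarrow> real) \<Rightarrow> nat set" where
  "Aset C0 r m1 m2 \<omega> sig = {j \<in> {1..r}.
      sig j \<ge> max (4 * real r / (4 * real r - 1) * sig (j + 1))
                   (C0 * real r * ((real m1 * real m2) powr (1/4) + real r * sqrt (real m1))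
                      * \<omega> * ln (real (max m1 m2)))}"

definition rbar :: "real \<Rightarrow> nat \<Rightarrow> nat \<Rightarrow> nat \<Rightarrow> real \<Rightarrow> (nat \<Rightarrow> real) \<Rightarrow> nat" where
  "rbar C0 r m1 m2 \<omega> sig = (if Aset C0 r m1 m2 \<omega> sig = {} then 0 else Max (Aset C0 r m1 m2 \<omega> sig))"

text \<open>Z1, Z2, Z3 (rb = rbar, Ut = tilde U^(1)).\<close>
definition Z1 :: "real mat \<Rightarrow> real mat \<Rightarrow> (nat \<Rightarrow> real) \<Rightarrow> nat \<Rightarrow> nat \<Rightarrow> real mat \<Rightarrow> real mat" where
  "Z1 U V sig r rb E =
     (let U2 = col_block U rb r; V2 = col_block V rb r; S2 = sig_block sig rb r in
      U2 * S2 * V2\<^sup>T * E\<^sup>T + E * V2 * S2 * U2\<^sup>T + E * V2 * V2\<^sup>T * E\<^sup>T)"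

definition Z2 :: "real mat \<Rightarrow> (nat \<Rightarrow> real) \<Rightarrow> nat \<Rightarrow> nat \<Rightarrow> real mat \<Rightarrow> real mat" where
  "Z2 U sig r rb Ut =
     (let U2 = col_block U rb r; S2 = sig_block sig rb r in
      proj Ut * U2 * (S2 * S2) * U2\<^sup>T * proj_perp Ut + U2 * (S2 * S2) * U2\<^sup>T * proj Ut)"

definition Z3 :: "real mat \<Rightarrow> real mat \<Rightarrow> real mat" where
  "Z3 V E = offdiag (E * E\<^sup>T - E * V * V\<^sup>T * E\<^sup>T)"

end

(*
  Write A = offdiag (E E^T) and P = (E V)(E V)^T, so that Z3 = A + diag P - P.  Expanding a power of
  Z3 around A, each step either applies one more factor A, whose effect on the (2,infinity) norm is
  controlled by hypothesis (i), or passes through diag P or P, whose operator norms are small compared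
  with rho; these detours cost at most half of the remaining budget, which gives the bounds for U and
  E V (even with the factor 2 instead of 3).  For the perturbed singular vectors, the SVD of
  U1 Sigma1 + E V1 shows that the part of tilde U orthogonal to U1 equals (I - U1 U1^T) E V1 times a
  matrix of norm at most one over the smallest singular value, which (ii) and the gap encoded in (iv)
  bound from below.  Z1 and Z2 are sums of products of these matrices with factors of operator norm at
  most sigma_(rbar+1) or ||E V||, so their bounds follow by submultiplicativity.
*)
theory Submission
  imports Defs
begin

section \<open>Vector norms and operator and row bounds of real matrices\<close>

lemma vnorm_eq_L2_set: "vnorm v = L2_set (\<lambda>i. v $ i) {0..<dim_vec v}"
  unfolding vnorm_def L2_set_def scalar_prod_def by (simp add: power2_eq_square)

lemma vnorm_nonneg: "0 \<le> vnorm v"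
  unfolding vnorm_eq_L2_set by (rule L2_set_nonneg)

lemma vnorm_square: "(vnorm v)\<^sup>2 = v \<bullet> (v :: real vec)"
  unfolding vnorm_def scalar_prod_def by (simp add: sum_nonneg)

lemma abs_scalar_prod_le_vnorm:
  assumes "dim_vec (v :: real vec) = dim_vec w"
  shows "\<bar>v \<bullet> w\<bar> \<le> vnorm v * vnorm w"
proof -
  have "\<bar>v \<bullet> w\<bar> \<le> (\<Sum>i\<in>{0..<dim_vec w}. \<bar>v $ i\<bar> * \<bar>w $ i\<bar>)"
    unfolding scalar_prod_def by (metis (no_types, lifting) abs_mult sum.cong sum_abs)
  also have "\<dots> \<le> vnorm v * vnorm w"
    unfolding vnorm_eq_L2_set using assms L2_set_mult_ineq by metis
  finally show ?thesis .
qed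

lemma vnorm_add_le:
  assumes "dim_vec (v :: real vec) = dim_vec w"
  shows "vnorm (v + w) \<le> vnorm v + vnorm w"
proof -
  have "vnorm (v + w) = L2_set (\<lambda>i. v $ i + w $ i) {0..<dim_vec w}"
    unfolding vnorm_eq_L2_set using assms by (intro L2_set_cong) auto
  also have "\<dots> \<le> vnorm v + vnorm w"
    unfolding vnorm_eq_L2_set using assms by (metis L2_set_triangle_ineq)
  finally show ?thesis .
qed

lemma vnorm_uminus: "vnorm (- v) = vnorm (v :: real vec)"
  unfolding vnorm_eq_L2_set L2_set_def by simp

lemma vnorm_diff_le:
  assumes "dim_vec (v :: real vec) = dim_vec w"
  shows "vnorm (v - w) \<le> vnorm v + vnorm w"
proof -
  have "v - w = v + (- w)" using assms by auto
  then show ?thesis using vnorm_add_le[of v "- w"] assms by (simp add: vnorm_uminus)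
qed

lemma vnorm_smult: "vnorm (c \<cdot>\<^sub>v v) = \<bar>c\<bar> * vnorm (v :: real vec)"
proof -
  have "vnorm (c \<cdot>\<^sub>v v) = L2_set (\<lambda>i. \<bar>c\<bar> * v $ i) {0..<dim_vec v}"
    unfolding vnorm_eq_L2_set L2_set_def by (simp add: power_mult_distrib)
  then show ?thesis unfolding vnorm_eq_L2_set by (simp add: L2_set_right_distrib)
qed

lemma vnorm_eq_0_iff: "vnorm v = 0 \<longleftrightarrow> v = 0\<^sub>v (dim_vec (v :: real vec))"
proof
  assume "vnorm v = 0"
  then have "(\<Sum>i\<in>{0..<dim_vec v}. (v $ i)\<^sup>2) = 0"
    unfolding vnorm_eq_L2_set L2_set_def by simp
  then have "\<forall>i\<in>{0..<dim_vec v}. (v $ i)\<^sup>2 = 0"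
    by (subst (asm) sum_nonneg_eq_0_iff) auto
  then show "v = 0\<^sub>v (dim_vec v)" by (intro eq_vecI) auto
next
  assume "v = 0\<^sub>v (dim_vec v)"
  then have "\<forall>i<dim_vec v. v $ i = 0" by (metis index_zero_vec(1))
  then show "vnorm v = 0" unfolding vnorm_eq_L2_set L2_set_def by simp
qed

lemma vnorm_zero_vec [simp]: "vnorm (0\<^sub>v n) = 0"
  using vnorm_eq_0_iff by auto

lemma vnorm_unit_vec: "i < n \<Longrightarrow> vnorm (unit_vec n i) = 1"
  unfolding vnorm_def by simp

(* Bounds are kept as predicates, so that products, sums and transposes are estimated without going
   through the supremum in spec_norm or the maximum in norm_2inf. *)
definition op_bound :: "real mat \<Rightarrow> real \<Rightarrow> bool" where
  "op_bound A c \<longleftrightarrow> (\<forall>v \<in> carrier_vec (dim_col A). vnorm (A *\<^sub>v v) \<le> c * vnorm v)"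

definition row_bound :: "real mat \<Rightarrow> real \<Rightarrow> bool" where
  "row_bound A c \<longleftrightarrow> (\<forall>i < dim_row A. vnorm (row A i) \<le> c)"

lemma op_boundD: "op_bound A c \<Longrightarrow> v \<in> carrier_vec (dim_col A) \<Longrightarrow> vnorm (A *\<^sub>v v) \<le> c * vnorm v"
  unfolding op_bound_def by auto

lemma op_bound_mono: "op_bound A c \<Longrightarrow> c \<le> d \<Longrightarrow> op_bound A d"
  unfolding op_bound_def by (meson order_trans mult_right_mono vnorm_nonneg)

lemma row_bound_mono: "row_bound A c \<Longrightarrow> c \<le> d \<Longrightarrow> row_bound A d"
  unfolding row_bound_def by force

lemma op_bound_sum_row_norms: "op_bound A (\<Sum>i<dim_row A. vnorm (row A i))"
  unfolding op_bound_def
proof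
  fix v :: "real vec" assume v: "v \<in> carrier_vec (dim_col A)"
  have "vnorm (A *\<^sub>v v) = L2_set (\<lambda>i. row A i \<bullet> v) {0..<dim_row A}"
    unfolding vnorm_eq_L2_set by (intro L2_set_cong) auto
  also have "\<dots> \<le> (\<Sum>i\<in>{0..<dim_row A}. \<bar>row A i \<bullet> v\<bar>)" by (rule L2_set_le_sum_abs)
  also have "\<dots> \<le> (\<Sum>i\<in>{0..<dim_row A}. vnorm (row A i) * vnorm v)"
    using v by (intro sum_mono abs_scalar_prod_le_vnorm) auto
  finally show "vnorm (A *\<^sub>v v) \<le> (\<Sum>i<dim_row A. vnorm (row A i)) * vnorm v"
    by (simp add: sum_distrib_right atLeast0LessThan)
qed

lemma spec_norm_set_bdd_above:
  "bdd_above {vnorm (A *\<^sub>v v) | v. v \<in> carrier_vec (dim_col A) \<and> vnorm v \<le> 1}"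
proof (rule bdd_aboveI)
  let ?c = "\<Sum>i<dim_row A. vnorm (row A i)"
  fix x assume "x \<in> {vnorm (A *\<^sub>v v) | v. v \<in> carrier_vec (dim_col A) \<and> vnorm v \<le> 1}"
  then obtain v where v: "v \<in> carrier_vec (dim_col A)" "vnorm v \<le> 1" and x: "x = vnorm (A *\<^sub>v v)"
    by blast
  have "x \<le> ?c * vnorm v" using op_boundD[OF op_bound_sum_row_norms v(1)] x by simp
  also have "\<dots> \<le> ?c" using v(2) by (simp add: mult_left_le sum_nonneg vnorm_nonneg)
  finally show "x \<le> ?c" .
qed

lemma mult_mat_zero_vec: "A *\<^sub>v 0\<^sub>v (dim_col A) = 0\<^sub>v (dim_row (A :: real mat))"
  by (intro eq_vecI) (auto simp: scalar_prod_def)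

lemma op_bound_spec_norm: "op_bound A (spec_norm A)"
  unfolding op_bound_def
proof
  fix v :: "real vec" assume v: "v \<in> carrier_vec (dim_col A)"
  show "vnorm (A *\<^sub>v v) \<le> spec_norm A * vnorm v"
  proof (cases "vnorm v = 0")
    case True
    then have "v = 0\<^sub>v (dim_col A)" using v vnorm_eq_0_iff by auto
    then show ?thesis by (simp add: mult_mat_zero_vec)
  next
    case False
    then have pos: "0 < vnorm v" using vnorm_nonneg[of v] by linarith
    define u where "u = (1 / vnorm v) \<cdot>\<^sub>v v"
    have u: "u \<in> carrier_vec (dim_col A)" "vnorm u = 1"
      using v pos unfolding u_def by (auto simp: vnorm_smult)
    have "A *\<^sub>v u = (1 / vnorm v) \<cdot>\<^sub>v (A *\<^sub>v v)"
      unfolding u_def using v by (intro mult_mat_vec[of _ "dim_row A" "dim_col A"]) auto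
    moreover have "vnorm (A *\<^sub>v u) \<le> spec_norm A" unfolding spec_norm_def
      using u by (intro cSup_upper spec_norm_set_bdd_above) auto
    ultimately have "vnorm (A *\<^sub>v v) / vnorm v \<le> spec_norm A" using pos by (simp add: vnorm_smult)
    then show ?thesis using pos by (simp add: divide_le_eq mult.commute)
  qed
qed

lemma op_bound_if_spec_norm_le: "spec_norm A \<le> c \<Longrightarrow> op_bound A c"
  using op_bound_spec_norm op_bound_mono by blast

lemma norm_2inf_le_iff: "0 \<le> c \<Longrightarrow> norm_2inf A \<le> c \<longleftrightarrow> row_bound A c"
  unfolding norm_2inf_def row_bound_def by (auto simp: Max_le_iff)

lemma norm_2inf_le: "0 \<le> c \<Longrightarrow> row_bound A c \<Longrightarrow> norm_2inf A \<le> c"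
  using norm_2inf_le_iff by blast

lemma norm_2inf_le_0_imp_zero:
  assumes "norm_2inf A \<le> 0"
  shows "A = 0\<^sub>m (dim_row A) (dim_col A)"
proof (rule eq_matI)
  fix i j assume "i < dim_row (0\<^sub>m (dim_row A) (dim_col A))" "j < dim_col (0\<^sub>m (dim_row A) (dim_col A))"
  then have i: "i < dim_row A" and j: "j < dim_col A" by auto
  have "vnorm (row A i) = 0"
    using assms i vnorm_nonneg[of "row A i"] norm_2inf_le_iff[of 0 A] unfolding row_bound_def by force
  then have "row A i = 0\<^sub>v (dim_col A)" using vnorm_eq_0_iff by auto
  then show "A $$ (i, j) = 0\<^sub>m (dim_row A) (dim_col A) $$ (i, j)"
    using i j by (metis index_row(1) index_zero_mat(1) index_zero_vec(1))
qed auto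

lemma op_bound_mult:
  assumes "dim_col A = dim_row B" "op_bound A a" "op_bound B b" "0 \<le> a"
  shows "op_bound (A * B) (a * b)"
  unfolding op_bound_def
proof
  fix v :: "real vec" assume "v \<in> carrier_vec (dim_col (A * B))"
  then have v: "v \<in> carrier_vec (dim_col B)" by simp
  have A: "A \<in> carrier_mat (dim_row A) (dim_row B)" using assms(1) by auto
  have B: "B \<in> carrier_mat (dim_row B) (dim_col B)" by auto
  have Bv: "B *\<^sub>v v \<in> carrier_vec (dim_col A)" using assms(1) B v by (metis mult_mat_vec_carrier)
  have "(A * B) *\<^sub>v v = A *\<^sub>v (B *\<^sub>v v)" using A B v by (rule assoc_mult_mat_vec)
  also have "vnorm \<dots> \<le> a * vnorm (B *\<^sub>v v)" using assms(2) Bv by (rule op_boundD)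
  also have "\<dots> \<le> a * (b * vnorm v)" using assms(3,4) v by (intro mult_left_mono op_boundD) auto
  finally show "vnorm ((A * B) *\<^sub>v v) \<le> a * b * vnorm v" by (simp add: mult.assoc)
qed

lemma op_bound_add:
  assumes "dim_row A = dim_row B" "dim_col A = dim_col B" "op_bound A a" "op_bound B b"
  shows "op_bound (A + B) (a + b)"
  unfolding op_bound_def
proof
  fix v :: "real vec" assume "v \<in> carrier_vec (dim_col (A + B))"
  then have v: "v \<in> carrier_vec (dim_col B)" by simp
  have A: "A \<in> carrier_mat (dim_row B) (dim_col B)" using assms(1,2) by auto
  have B: "B \<in> carrier_mat (dim_row B) (dim_col B)" by auto
  have "(A + B) *\<^sub>v v = A *\<^sub>v v + B *\<^sub>v v" using A B v by (rule add_mult_distrib_mat_vec)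
  also have "vnorm \<dots> \<le> vnorm (A *\<^sub>v v) + vnorm (B *\<^sub>v v)" using assms(1) by (intro vnorm_add_le) simp
  also have "\<dots> \<le> a * vnorm v + b * vnorm v"
    using assms v by (intro add_mono op_boundD) auto
  finally show "vnorm ((A + B) *\<^sub>v v) \<le> (a + b) * vnorm v" by (simp add: algebra_simps)
qed

lemma op_bound_diff:
  assumes "dim_row A = dim_row B" "dim_col A = dim_col B" "op_bound A a" "op_bound B b"
  shows "op_bound (A - B) (a + b)"
  unfolding op_bound_def
proof
  fix v :: "real vec" assume "v \<in> carrier_vec (dim_col (A - B))"
  then have v: "v \<in> carrier_vec (dim_col B)" by simp
  have A: "A \<in> carrier_mat (dim_row B) (dim_col B)" using assms(1,2) by auto
  have B: "B \<in> carrier_mat (dim_row B) (dim_col B)" by auto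
  have "(A - B) *\<^sub>v v = A *\<^sub>v v - B *\<^sub>v v" using A B v by (rule minus_mult_distrib_mat_vec)
  also have "vnorm \<dots> \<le> vnorm (A *\<^sub>v v) + vnorm (B *\<^sub>v v)" using assms(1) by (intro vnorm_diff_le) simp
  also have "\<dots> \<le> a * vnorm v + b * vnorm v"
    using assms v by (intro add_mono op_boundD) auto
  finally show "vnorm ((A - B) *\<^sub>v v) \<le> (a + b) * vnorm v" by (simp add: algebra_simps)
qed

lemma op_bound_transpose:
  assumes "op_bound A a" "0 \<le> a"
  shows "op_bound A\<^sup>T a"
  unfolding op_bound_def
proof
  fix w :: "real vec" assume "w \<in> carrier_vec (dim_col A\<^sup>T)"
  then have w: "w \<in> carrier_vec (dim_row A)" by simp
  have A: "A \<in> carrier_mat (dim_row A) (dim_col A)" by simp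
  define u where "u = A\<^sup>T *\<^sub>v w"
  have u: "u \<in> carrier_vec (dim_col A)"
    unfolding u_def using A w by (metis mult_mat_vec_carrier transpose_carrier_mat)
  have "(vnorm u)\<^sup>2 = w \<bullet> (A *\<^sub>v u)"
    unfolding vnorm_square u_def using A u w by (intro transpose_vec_mult_scalar) (auto simp: u_def)
  also have "\<dots> \<le> vnorm w * vnorm (A *\<^sub>v u)"
    using abs_scalar_prod_le_vnorm[of w "A *\<^sub>v u"] w by auto
  also have "\<dots> \<le> vnorm w * (a * vnorm u)"
    using assms u by (intro mult_left_mono op_boundD) (auto simp: vnorm_nonneg)
  finally have sq: "vnorm u * vnorm u \<le> (a * vnorm w) * vnorm u"
    by (simp add: power2_eq_square algebra_simps)
  have "vnorm u \<le> a * vnorm w"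
  proof (cases "vnorm u = 0")
    case True
    then show ?thesis using assms(2) vnorm_nonneg[of w] by simp
  next
    case False
    then show ?thesis using sq vnorm_nonneg[of u] by (simp add: mult_le_cancel_right)
  qed
  then show "vnorm (A\<^sup>T *\<^sub>v w) \<le> a * vnorm w" unfolding u_def .
qed

lemma op_bound_orthonormal_cols:
  assumes "orthonormal_cols U"
  shows "op_bound U 1"
  unfolding op_bound_def
proof
  fix v :: "real vec" assume v: "v \<in> carrier_vec (dim_col U)"
  have U: "U \<in> carrier_mat (dim_row U) (dim_col U)" by simp
  have Uv: "U *\<^sub>v v \<in> carrier_vec (dim_row U)" using U v by (rule mult_mat_vec_carrier)
  have "(vnorm (U *\<^sub>v v))\<^sup>2 = (U\<^sup>T *\<^sub>v (U *\<^sub>v v)) \<bullet> v"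
    unfolding vnorm_square using transpose_vec_mult_scalar[OF U v Uv] by simp
  also have "U\<^sup>T *\<^sub>v (U *\<^sub>v v) = (U\<^sup>T * U) *\<^sub>v v"
    using assoc_mult_mat_vec[OF transpose_carrier_mat[THEN iffD2, OF U] U v] by simp
  also have "\<dots> = v" using assms v unfolding orthonormal_cols_def by auto
  finally have "(vnorm (U *\<^sub>v v))\<^sup>2 = (vnorm v)\<^sup>2" by (simp add: vnorm_square)
  then show "vnorm (U *\<^sub>v v) \<le> 1 * vnorm v"
    by (simp add: power2_eq_iff_nonneg vnorm_nonneg)
qed

lemma op_bound_one: "op_bound (1\<^sub>m n) 1"
  unfolding op_bound_def by auto

lemma op_bound_zero: "op_bound (0\<^sub>m n k) 0"
  unfolding op_bound_def
proof
  fix v :: "real vec" assume "v \<in> carrier_vec (dim_col (0\<^sub>m n k))"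
  then have "0\<^sub>m n k *\<^sub>v v = 0\<^sub>v n" by (intro eq_vecI) auto
  then show "vnorm (0\<^sub>m n k *\<^sub>v v) \<le> 0 * vnorm v" by simp
qed

lemma op_bound_pow:
  assumes "A \<in> carrier_mat n n" "op_bound A a" "0 \<le> a"
  shows "op_bound (A ^\<^sub>m k) (a ^ k)"
proof (induction k)
  case 0
  then show ?case using assms(1) op_bound_one by auto
next
  case (Suc k)
  then have "op_bound (A ^\<^sub>m k * A) (a ^ k * a)"
    using assms by (intro op_bound_mult) auto
  then show ?case by (simp add: mult.commute)
qed

lemma op_bound_diagonal:
  assumes "diagonal_mat D" "dim_row D = dim_col D" "\<And>i. i < dim_row D \<Longrightarrow> \<bar>D $$ (i, i)\<bar> \<le> d"
  shows "op_bound D d"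
  unfolding op_bound_def
proof
  let ?n = "dim_row D"
  fix v :: "real vec" assume v: "v \<in> carrier_vec (dim_col D)"
  have Dv: "(D *\<^sub>v v) $ i = D $$ (i, i) * v $ i" if i: "i < ?n" for i
  proof -
    have "(D *\<^sub>v v) $ i = (\<Sum>j\<in>{0..<?n}. D $$ (i, j) * v $ j)"
      using assms(2) v i by (auto simp: scalar_prod_def)
    also have "\<dots> = D $$ (i, i) * v $ i"
      using i assms(1,2) unfolding diagonal_mat_def
      by (subst sum.remove[of _ i]) (auto intro!: sum.neutral)
    finally show ?thesis .
  qed
  have "vnorm (D *\<^sub>v v) = L2_set (\<lambda>i. \<bar>D $$ (i, i)\<bar> * \<bar>v $ i\<bar>) {0..<?n}"
    unfolding vnorm_eq_L2_set L2_set_def using Dv by (simp add: power_mult_distrib)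
  also have "\<dots> \<le> L2_set (\<lambda>i. d * \<bar>v $ i\<bar>) {0..<?n}"
    using assms(3) by (intro L2_set_mono mult_right_mono) auto
  also have "\<dots> = d * vnorm v"
  proof (cases "?n = 0")
    case True
    then show ?thesis using v assms(2) by (simp add: vnorm_eq_L2_set L2_set_def)
  next
    case False
    then have "0 \<le> d" using assms(3)[of 0] by linarith
    then show ?thesis using v assms(2) unfolding vnorm_eq_L2_set L2_set_def
      by (simp add: power_mult_distrib sum_distrib_left[symmetric] real_sqrt_mult)
  qed
  finally show "vnorm (D *\<^sub>v v) \<le> d * vnorm v" .
qed

lemma row_eq_transpose_mult_unit_vec:
  assumes A: "(A :: real mat) \<in> carrier_mat nr nc" and i: "i < nr"
  shows "row A i = A\<^sup>T *\<^sub>v unit_vec nr i"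
proof (rule eq_vecI)
  fix j assume "j < dim_vec (A\<^sup>T *\<^sub>v unit_vec nr i)"
  then have j: "j < nc" using A by auto
  have "(A\<^sup>T *\<^sub>v unit_vec nr i) $ j = col A j \<bullet> unit_vec nr i" using A j by auto
  also have "\<dots> = col A j $ i" using i by simp
  finally show "row A i $ j = (A\<^sup>T *\<^sub>v unit_vec nr i) $ j" using A i j by auto
qed (use A in auto)

lemma row_bound_if_op_bound:
  assumes "op_bound A c" "0 \<le> c"
  shows "row_bound A c"
  unfolding row_bound_def
proof (intro allI impI)
  fix i assume i: "i < dim_row A"
  have A: "A \<in> carrier_mat (dim_row A) (dim_col A)" by simp
  have "vnorm (A\<^sup>T *\<^sub>v unit_vec (dim_row A) i) \<le> c * vnorm (unit_vec (dim_row A) i)"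
    using op_bound_transpose[OF assms] by (intro op_boundD) auto
  then show "vnorm (row A i) \<le> c"
    using row_eq_transpose_mult_unit_vec[OF A i] vnorm_unit_vec[OF i] by simp
qed

lemma row_bound_mult:
  assumes "dim_col A = dim_row B" "row_bound A a" "op_bound B b" "0 \<le> b"
  shows "row_bound (A * B) (a * b)"
proof -
  have "row_bound (A * B) (a * b)" if A: "A \<in> carrier_mat nr n" and B: "B \<in> carrier_mat n nc"
    for nr n nc
    unfolding row_bound_def
  proof (intro allI impI)
    fix i assume "i < dim_row (A * B)"
    then have i: "i < nr" using A by auto
    have "row (A * B) i = B\<^sup>T *\<^sub>v row A i"
      using A B i by (intro eq_vecI) (auto simp: comm_scalar_prod[of _ n])
    moreover have "vnorm (B\<^sup>T *\<^sub>v row A i) \<le> b * vnorm (row A i)"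
      using op_bound_transpose[OF assms(3,4)] A B by (intro op_boundD) auto
    moreover have "b * vnorm (row A i) \<le> b * a"
      using assms(2,4) i A unfolding row_bound_def by (intro mult_left_mono) auto
    ultimately show "vnorm (row (A * B) i) \<le> a * b" by (simp add: mult.commute)
  qed
  then show ?thesis using assms(1) by (metis carrier_matI)
qed

lemma row_bound_add:
  assumes "dim_row A = dim_row B" "dim_col A = dim_col B" "row_bound A a" "row_bound B b"
  shows "row_bound (A + B) (a + b)"
  unfolding row_bound_def
proof (intro allI impI)
  fix i assume "i < dim_row (A + B)"
  then have i: "i < dim_row A" "i < dim_row B" using assms by auto
  have "row (A + B) i = row A i + row B i" using assms i by (intro eq_vecI) auto
  moreover have "vnorm (row A i + row B i) \<le> vnorm (row A i) + vnorm (row B i)"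
    using assms by (intro vnorm_add_le) auto
  ultimately show "vnorm (row (A + B) i) \<le> a + b"
    using assms(3,4) i unfolding row_bound_def by force
qed

lemma row_bound_diff:
  assumes "dim_row A = dim_row B" "dim_col A = dim_col B" "row_bound A a" "row_bound B b"
  shows "row_bound (A - B) (a + b)"
  unfolding row_bound_def
proof (intro allI impI)
  fix i assume "i < dim_row (A - B)"
  then have i: "i < dim_row A" "i < dim_row B" using assms by auto
  have "row (A - B) i = row A i - row B i" using assms i by (intro eq_vecI) auto
  moreover have "vnorm (row A i - row B i) \<le> vnorm (row A i) + vnorm (row B i)"
    using assms by (intro vnorm_diff_le) auto
  ultimately show "vnorm (row (A - B) i) \<le> a + b"
    using assms(3,4) i unfolding row_bound_def by force
qed

lemma row_bound_zero: "0 \<le> c \<Longrightarrow> row_bound (0\<^sub>m n k) c"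
  using row_bound_if_op_bound[OF op_bound_zero, of n k] row_bound_mono by blast

section \<open>Matrix algebra and column blocks\<close>

lemma assoc_mult_mat_dim:
  "dim_col (A :: real mat) = dim_row B \<Longrightarrow> dim_col B = dim_row C \<Longrightarrow> A * B * C = A * (B * C)"
  by (rule assoc_mult_mat[of A "dim_row A" "dim_col A" B "dim_col B" C "dim_col C"]) auto

lemma mult_add_distrib_mat_dim:
  "dim_col (A :: real mat) = dim_row B \<Longrightarrow> dim_row C = dim_row B \<Longrightarrow> dim_col C = dim_col B
   \<Longrightarrow> A * (B + C) = A * B + A * C"
  by (rule mult_add_distrib_mat[of A "dim_row A" "dim_col A" B "dim_col B"]) auto

lemma mult_minus_distrib_mat_dim:
  "dim_col (A :: real mat) = dim_row B \<Longrightarrow> dim_row C = dim_row B \<Longrightarrow> dim_col C = dim_col B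
   \<Longrightarrow> A * (B - C) = A * B - A * C"
  by (rule mult_minus_distrib_mat[of A "dim_row A" "dim_col A" B "dim_col B"]) auto

lemma add_mult_distrib_mat_dim:
  "dim_row (A :: real mat) = dim_row B \<Longrightarrow> dim_col A = dim_col B \<Longrightarrow> dim_col A = dim_row C
   \<Longrightarrow> (A + B) * C = A * C + B * C"
  by (rule add_mult_distrib_mat[of A "dim_row A" "dim_col A" B C "dim_col C"]) auto

lemma transpose_mult_dim: "dim_col (A :: real mat) = dim_row B \<Longrightarrow> (A * B)\<^sup>T = B\<^sup>T * A\<^sup>T"
  by (rule transpose_mult[of A "dim_row A" "dim_col A" B "dim_col B"]) auto

lemma add_diff_add_mat_cancel:
  "dim_row X = dim_row Y \<Longrightarrow> dim_col X = dim_col Y \<Longrightarrow> dim_row Z = dim_row Y \<Longrightarrow> dim_col Z = dim_col Y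
   \<Longrightarrow> (X + Y) - (X + Z) = Y - (Z :: real mat)"
  by (intro eq_matI) auto

lemma minus_zero_mat_dim: "dim_row A = n \<Longrightarrow> dim_col A = k \<Longrightarrow> A - 0\<^sub>m n k = (A :: real mat)"
  by (intro eq_matI) auto

lemma orthonormal_cols_mult:
  assumes "orthonormal_cols U" "orthonormal_cols S" "dim_col U = dim_row S"
  shows "orthonormal_cols (U * S)"
proof -
  have "(U * S)\<^sup>T * (U * S) = S\<^sup>T * ((U\<^sup>T * U) * S)"
    using assms(3) by (simp add: transpose_mult_dim assoc_mult_mat_dim)
  also have "\<dots> = 1\<^sub>m (dim_col (U * S))"
    using assms unfolding orthonormal_cols_def by simp
  finally show ?thesis unfolding orthonormal_cols_def .
qed

definition col_sel :: "nat \<Rightarrow> nat \<Rightarrow> nat \<Rightarrow> real mat" where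
  "col_sel a b n = mat n (b - a) (\<lambda>(i, j). if i = j + a then 1 else 0)"

lemma col_sel_dim [simp]: "dim_row (col_sel a b n) = n" "dim_col (col_sel a b n) = b - a"
  unfolding col_sel_def by auto

lemma col_block_eq_mult_col_sel:
  assumes M: "M \<in> carrier_mat nr n" and "b \<le> n"
  shows "col_block M a b = M * col_sel a b n"
proof (rule eq_matI)
  fix i j assume "i < dim_row (M * col_sel a b n)" "j < dim_col (M * col_sel a b n)"
  then have i: "i < nr" and j: "j < b - a" using M by auto
  have "(M * col_sel a b n) $$ (i, j) = (\<Sum>k\<in>{0..<n}. M $$ (i, k) * (if k = j + a then 1 else 0))"
    using M i j unfolding col_sel_def by (auto simp: scalar_prod_def)
  also have "\<dots> = (\<Sum>k\<in>{0..<n}. if k = j + a then M $$ (i, k) else 0)" by (intro sum.cong) auto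
  also have "\<dots> = M $$ (i, j + a)" using j assms(2) by simp
  finally show "col_block M a b $$ (i, j) = (M * col_sel a b n) $$ (i, j)"
    unfolding col_block_def using i j M by auto
qed (use M in \<open>auto simp: col_block_def\<close>)

lemma orthonormal_cols_col_sel:
  assumes "b \<le> n"
  shows "orthonormal_cols (col_sel a b n)"
  unfolding orthonormal_cols_def
proof (rule eq_matI)
  fix i j assume "i < dim_row (1\<^sub>m (dim_col (col_sel a b n)))" "j < dim_col (1\<^sub>m (dim_col (col_sel a b n)))"
  then have i: "i < b - a" and j: "j < b - a" by auto
  have "((col_sel a b n)\<^sup>T * col_sel a b n) $$ (i, j)
      = (\<Sum>k\<in>{0..<n}. (if k = i + a then 1 else 0) * (if k = j + a then 1 else (0 :: real)))"
    using i j unfolding col_sel_def by (auto simp: scalar_prod_def)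
  also have "\<dots> = (\<Sum>k\<in>{0..<n}. if k = i + a then (if i = j then 1 else 0) else 0)"
    by (intro sum.cong) auto
  also have "\<dots> = (if i = j then 1 else 0)" using i j assms by auto
  finally show "((col_sel a b n)\<^sup>T * col_sel a b n) $$ (i, j) = 1\<^sub>m (dim_col (col_sel a b n)) $$ (i, j)"
    using i j by auto
qed auto

lemma transpose_col_sel_mult_col_sel_disjoint:
  assumes "b \<le> c"
  shows "(col_sel c d n)\<^sup>T * col_sel a b n = 0\<^sub>m (d - c) (b - a)"
proof (rule eq_matI)
  fix i j assume "i < dim_row (0\<^sub>m (d - c) (b - a))" "j < dim_col (0\<^sub>m (d - c) (b - a))"
  then have i: "i < d - c" and j: "j < b - a" by auto
  have "((col_sel c d n)\<^sup>T * col_sel a b n) $$ (i, j)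
      = (\<Sum>k\<in>{0..<n}. (if k = i + c then 1 else 0) * (if k = j + a then 1 else (0 :: real)))"
    using i j unfolding col_sel_def by (auto simp: scalar_prod_def)
  also have "\<dots> = 0" using j assms by (intro sum.neutral) auto
  finally show "((col_sel c d n)\<^sup>T * col_sel a b n) $$ (i, j) = 0\<^sub>m (d - c) (b - a) $$ (i, j)"
    using i j by auto
qed auto

definition diag_part :: "real mat \<Rightarrow> real mat" where
  "diag_part M = mat (dim_row M) (dim_col M) (\<lambda>(i, j). if i = j then M $$ (i, i) else 0)"

lemma offdiag_diff:
  assumes B: "B \<in> carrier_mat n n" and P: "P \<in> carrier_mat n n"
  shows "offdiag (B - P) = offdiag B + diag_part P - P"
  using assms by (intro eq_matI) (auto simp: offdiag_def diag_part_def)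

lemma op_bound_diag_part_gram:
  assumes "row_bound Y a" "row_bound Y b"
  shows "op_bound (diag_part (Y * Y\<^sup>T)) (a * b)"
proof (rule op_bound_diagonal)
  show "diagonal_mat (diag_part (Y * Y\<^sup>T))" unfolding diagonal_mat_def diag_part_def by simp
  show "dim_row (diag_part (Y * Y\<^sup>T)) = dim_col (diag_part (Y * Y\<^sup>T))" unfolding diag_part_def by simp
  fix i assume "i < dim_row (diag_part (Y * Y\<^sup>T))"
  then have i: "i < dim_row Y" unfolding diag_part_def by simp
  have "(Y * Y\<^sup>T) $$ (i, i) = (vnorm (row Y i))\<^sup>2" using i by (simp add: vnorm_square)
  moreover have "(vnorm (row Y i))\<^sup>2 \<le> a * b" unfolding power2_eq_square
    using assms i vnorm_nonneg[of "row Y i"] unfolding row_bound_def by (intro mult_mono) force+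
  ultimately show "\<bar>diag_part (Y * Y\<^sup>T) $$ (i, i)\<bar> \<le> a * b" using i by (simp add: diag_part_def)
qed

lemma pow_mat_Suc_left:
  assumes "(Z :: real mat) \<in> carrier_mat n n"
  shows "Z ^\<^sub>m Suc k = Z * Z ^\<^sub>m k"
proof (induction k)
  case 0
  then show ?case using assms by simp
next
  case (Suc k)
  have "Z ^\<^sub>m Suc (Suc k) = (Z * Z ^\<^sub>m k) * Z" using Suc by simp
  also have "\<dots> = Z * (Z ^\<^sub>m k * Z)" using assms by (intro assoc_mult_mat[of _ n n _ n _ n]) auto
  finally show ?case by simp
qed

section \<open>Powers of a matrix perturbed by a diagonal and a low-rank term\<close>

lemma mult_pow_Suc_perturbed_eq:
  fixes A D Y X Z :: "real mat"
  assumes A: "A \<in> carrier_mat n n" and D: "D \<in> carrier_mat n n"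
    and Y: "Y \<in> carrier_mat n k" and X: "X \<in> carrier_mat n q"
    and Z: "Z = A + D - Y * Y\<^sup>T" and W: "W = Z ^\<^sub>m m * X"
  shows "A ^\<^sub>m j * (Z ^\<^sub>m Suc m * X) = A ^\<^sub>m Suc j * W + A ^\<^sub>m j * (D * W) - (A ^\<^sub>m j * Y) * (Y\<^sup>T * W)"
proof -
  have Zc: "Z \<in> carrier_mat n n" using A D Y unfolding Z by auto
  have Wc: "W \<in> carrier_mat n q" unfolding W using Zc X by auto
  have Aj: "A ^\<^sub>m j \<in> carrier_mat n n" using A by auto
  have ZW: "Z * W = A * W + D * W - Y * (Y\<^sup>T * W)"
    unfolding Z using A D Y Wc
    by (simp add: add_mult_distrib_mat[of _ n n] minus_mult_distrib_mat[of _ n n]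
        assoc_mult_mat[of Y n k _ n _ q])
  have "A ^\<^sub>m j * (Z ^\<^sub>m Suc m * X) = A ^\<^sub>m j * (Z * W)"
    unfolding W pow_mat_Suc_left[OF Zc] using Zc X by (simp add: assoc_mult_mat[of _ n n _ n _ q])
  also have "\<dots> = A ^\<^sub>m Suc j * W + A ^\<^sub>m j * (D * W) - (A ^\<^sub>m j * Y) * (Y\<^sup>T * W)"
    unfolding ZW using A D Y Wc Aj
    by (simp add: mult_minus_distrib_mat[of _ n n _ q] mult_add_distrib_mat[of _ n n _ q]
        assoc_mult_mat[of _ n n _ n _ q] assoc_mult_mat[of _ n n _ k _ q])
  finally show ?thesis .
qed

lemma perturbation_step_le:
  fixes \<rho> \<alpha> \<eta> d x y :: real
  assumes \<rho>: "0 \<le> \<rho>" and dx: "0 \<le> d * x" "d * x \<le> \<alpha> * \<rho> / 4" and yx: "\<eta> * y * x \<le> \<alpha> * \<rho> / 4"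
  shows "\<alpha> * \<rho> ^ (Suc j + m) * (2 - 1 / 2 ^ m) + (\<rho> / 2) ^ j * (d * ((\<rho> / 2) ^ m * x))
      + \<eta> * \<rho> ^ j * (y * ((\<rho> / 2) ^ m * x)) \<le> \<alpha> * \<rho> ^ (j + Suc m) * (2 - 1 / 2 ^ Suc m)"
proof -
  define c where "c = \<rho> ^ j * (\<rho> / 2) ^ m * (\<alpha> * \<rho> / 4)"
  have pow: "0 \<le> \<rho> ^ j * (\<rho> / 2) ^ m" "(\<rho> / 2) ^ j \<le> \<rho> ^ j" using \<rho> by (auto intro: power_mono)
  have "(\<rho> / 2) ^ j * (d * ((\<rho> / 2) ^ m * x)) = (\<rho> / 2) ^ j * ((\<rho> / 2) ^ m * (d * x))"
    by (simp add: mult_ac)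
  also have "\<dots> \<le> \<rho> ^ j * ((\<rho> / 2) ^ m * (d * x))"
    using \<rho> dx(1) by (intro mult_right_mono[OF pow(2)]) simp
  also have "\<dots> = \<rho> ^ j * (\<rho> / 2) ^ m * (d * x)" by (simp add: mult_ac)
  also have "\<dots> \<le> c" unfolding c_def using dx(2) pow(1) by (rule mult_left_mono)
  finally have "(\<rho> / 2) ^ j * (d * ((\<rho> / 2) ^ m * x)) \<le> c" .
  moreover have "\<eta> * \<rho> ^ j * (y * ((\<rho> / 2) ^ m * x)) \<le> c"
    unfolding c_def using mult_left_mono[OF yx pow(1)] by (simp add: mult_ac)
  moreover have "2 * c = \<alpha> * \<rho> ^ (j + Suc m) / 2 ^ Suc m"
    unfolding c_def by (simp add: power_divide power_add field_simps)
  moreover have "\<alpha> * \<rho> ^ (j + Suc m) * (2 - 1 / 2 ^ Suc m)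
      = \<alpha> * \<rho> ^ (Suc j + m) * (2 - 1 / 2 ^ m) + \<alpha> * \<rho> ^ (j + Suc m) / 2 ^ Suc m"
    by (simp add: field_simps)
  ultimately show ?thesis by linarith
qed

context
  fixes A D Y X Z :: "real mat" and n k q N :: nat and \<rho> d y x \<alpha> \<eta> :: real
  assumes A: "A \<in> carrier_mat n n" and D: "D \<in> carrier_mat n n"
    and Y: "Y \<in> carrier_mat n k" and X: "X \<in> carrier_mat n q"
    and Z: "Z = A + D - Y * Y\<^sup>T"
    and \<rho>: "0 \<le> \<rho>" and op_A: "op_bound A (\<rho> / 2)" and op_Z: "op_bound Z (\<rho> / 2)"
    and op_D: "op_bound D d" and op_Y: "op_bound Y y" and op_X: "op_bound X x"
    and nonneg: "0 \<le> d" "0 \<le> y" "0 \<le> x"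
    and rows_AX: "\<And>j. j \<le> N \<Longrightarrow> row_bound (A ^\<^sub>m j * X) (\<alpha> * \<rho> ^ j)"
    and rows_AY: "\<And>j. j \<le> N \<Longrightarrow> row_bound (A ^\<^sub>m j * Y) (\<eta> * \<rho> ^ j)"
    and small_D: "d * x \<le> \<alpha> * \<rho> / 4" and small_Y: "\<eta> * y * x \<le> \<alpha> * \<rho> / 4"
begin

(* The two correction terms in mult_pow_Suc_perturbed_eq cost at most alpha rho^(j+m+1) / 2^(m+1),
   which the factor 2 - 1/2^m absorbs. *)
lemma row_bound_mult_pow_perturbed:
  "j + m \<le> N \<Longrightarrow> row_bound (A ^\<^sub>m j * (Z ^\<^sub>m m * X)) (\<alpha> * \<rho> ^ (j + m) * (2 - 1 / 2 ^ m))"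
proof (induction m arbitrary: j)
  case 0
  then show ?case using rows_AX[of j] A D X Y by (simp add: Z)
next
  case (Suc m)
  have Zc: "Z \<in> carrier_mat n n" using A D Y unfolding Z by auto
  define W where "W = Z ^\<^sub>m m * X"
  have W: "W \<in> carrier_mat n q" unfolding W_def using Zc X by auto
  have Aj: "A ^\<^sub>m j \<in> carrier_mat n n" using A by auto
  note split = mult_pow_Suc_perturbed_eq[OF A D Y X Z W_def, of j]
  define b1 where "b1 = \<alpha> * \<rho> ^ (Suc j + m) * (2 - 1 / 2 ^ m)"
  define b2 where "b2 = (\<rho> / 2) ^ j * (d * ((\<rho> / 2) ^ m * x))"
  define b3 where "b3 = \<eta> * \<rho> ^ j * (y * ((\<rho> / 2) ^ m * x))"
  have op_W: "op_bound W ((\<rho> / 2) ^ m * x)"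
    unfolding W_def using Zc X op_Z op_X \<rho> by (intro op_bound_mult op_bound_pow) auto
  have "row_bound (A ^\<^sub>m Suc j * W) b1"
    unfolding b1_def W_def by (rule Suc.IH) (use Suc.prems in simp)
  moreover have "row_bound (A ^\<^sub>m j * (D * W)) b2"
    unfolding b2_def using Aj D W A op_A op_D op_W \<rho> nonneg
    by (intro row_bound_if_op_bound op_bound_mult op_bound_pow) auto
  moreover have "op_bound (Y\<^sup>T * W) (y * ((\<rho> / 2) ^ m * x))"
    using Y W op_Y op_W nonneg by (intro op_bound_mult op_bound_transpose) auto
  then have "row_bound ((A ^\<^sub>m j * Y) * (Y\<^sup>T * W)) b3"
    unfolding b3_def using rows_AY[of j] Suc.prems A Y W nonneg \<rho>
    by (intro row_bound_mult[of "A ^\<^sub>m j * Y"]) auto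
  ultimately have "row_bound (A ^\<^sub>m j * (Z ^\<^sub>m Suc m * X)) (b1 + b2 + b3)"
    unfolding split using A D Y W Aj
    by (intro row_bound_diff row_bound_add) (auto simp del: pow_mat.simps)
  moreover have "b1 + b2 + b3 \<le> \<alpha> * \<rho> ^ (j + Suc m) * (2 - 1 / 2 ^ Suc m)"
    unfolding b1_def b2_def b3_def using \<rho> nonneg small_D small_Y by (intro perturbation_step_le) auto
  ultimately show ?case by (rule row_bound_mono)
qed

lemma row_bound_pow_perturbed:
  assumes "0 \<le> \<alpha>" "m \<le> N"
  shows "row_bound (Z ^\<^sub>m m * X) (2 * \<alpha> * \<rho> ^ m)"
proof -
  have "row_bound (A ^\<^sub>m 0 * (Z ^\<^sub>m m * X)) (\<alpha> * \<rho> ^ m * (2 - 1 / 2 ^ m))"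
    using row_bound_mult_pow_perturbed[of 0 m] assms by simp
  then have "row_bound (Z ^\<^sub>m m * X) (\<alpha> * \<rho> ^ m * (2 - 1 / 2 ^ m))" using A D X Y by (simp add: Z)
  moreover have "\<alpha> * \<rho> ^ m * (2 - 1 / 2 ^ m) \<le> 2 * \<alpha> * \<rho> ^ m"
    using mult_left_mono[of "2 - 1 / 2 ^ m" 2 "\<alpha> * \<rho> ^ m"] assms(1) \<rho> by (simp add: mult_ac)
  ultimately show ?thesis by (rule row_bound_mono)
qed

end

section \<open>The residual of a perturbed singular subspace\<close>

lemma diagonal_right_inverse:
  assumes S: "S \<in> carrier_mat k k" and diag: "\<And>i j. i < k \<Longrightarrow> j < k \<Longrightarrow> i \<noteq> j \<Longrightarrow> S $$ (i, j) = 0"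
    and \<delta>: "0 < \<delta>" "\<And>i. i < k \<Longrightarrow> \<delta> \<le> S $$ (i, i)"
  obtains T where "T \<in> carrier_mat k k" "S * T = 1\<^sub>m k" "op_bound T (1 / \<delta>)"
proof
  define T where "T = mat k k (\<lambda>(i, j). if i = j then 1 / S $$ (i, i) else 0)"
  show T: "T \<in> carrier_mat k k" unfolding T_def by simp
  show "op_bound T (1 / \<delta>)"
  proof (rule op_bound_diagonal)
    show "diagonal_mat T" "dim_row T = dim_col T" unfolding T_def diagonal_mat_def by auto
    fix i assume "i < dim_row T"
    then have i: "i < k" unfolding T_def by simp
    have le: "\<delta> \<le> S $$ (i, i)" using \<delta>(2)[OF i] .
    then have "\<bar>1 / S $$ (i, i)\<bar> = 1 / S $$ (i, i)" using \<delta>(1) by simp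
    also have "\<dots> \<le> 1 / \<delta>" using le \<delta>(1) by (intro divide_left_mono) auto
    finally show "\<bar>T $$ (i, i)\<bar> \<le> 1 / \<delta>" unfolding T_def using i by simp
  qed
  show "S * T = 1\<^sub>m k"
  proof (rule eq_matI)
    fix i j assume "i < dim_row (1\<^sub>m k)" "j < dim_col (1\<^sub>m k)"
    then have ij: "i < k" "j < k" by auto
    have "S $$ (j, j) \<noteq> 0" using \<delta> ij by (metis not_le order_less_le_trans)
    have "(S * T) $$ (i, j) = (\<Sum>l\<in>{0..<k}. S $$ (i, l) * (if l = j then 1 / S $$ (l, l) else 0))"
      unfolding T_def using S ij by (simp add: scalar_prod_def)
    also have "\<dots> = S $$ (i, j) / S $$ (j, j)" using ij by (simp add: if_distrib cong: if_cong)
    also have "\<dots> = 1\<^sub>m k $$ (i, j)" using ij diag[of i j] \<open>S $$ (j, j) \<noteq> 0\<close> by auto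
    finally show "(S * T) $$ (i, j) = 1\<^sub>m k $$ (i, j)" .
  qed (use S T in auto)
qed

lemma svd_residual_factor:
  fixes U1 S1 F Ut St Wt :: "real mat"
  assumes U1: "U1 \<in> carrier_mat n k" "orthonormal_cols U1" and S1: "S1 \<in> carrier_mat k k"
    and F: "F \<in> carrier_mat n k" and svd: "is_svd (U1 * S1 + F) Ut St Wt"
    and \<delta>: "0 < \<delta>" "\<And>j. j < k \<Longrightarrow> \<delta> \<le> St $$ (j, j)"
  obtains G where "G \<in> carrier_mat k k" "op_bound G (1 / \<delta>)"
    "Ut - U1 * (U1\<^sup>T * Ut) = F * G - U1 * (U1\<^sup>T * (F * G))"
proof -
  define M where "M = U1 * S1 + F"
  have M: "M \<in> carrier_mat n k" unfolding M_def using U1 S1 F by auto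
  then have Ut: "Ut \<in> carrier_mat n k" and St: "St \<in> carrier_mat k k" and Wt: "Wt \<in> carrier_mat k k"
    and oWt: "orthonormal_cols Wt" and St_diag: "\<And>i j. i < k \<Longrightarrow> j < k \<Longrightarrow> i \<noteq> j \<Longrightarrow> St $$ (i, j) = 0"
    and M_eq: "M = Ut * St * Wt\<^sup>T"
    using svd unfolding M_def[symmetric] is_svd_def by auto
  obtain T where T: "T \<in> carrier_mat k k" "St * T = 1\<^sub>m k" "op_bound T (1 / \<delta>)"
    using diagonal_right_inverse[OF St St_diag \<delta>] by blast
  define G where "G = Wt * T"
  note dims = carrier_matD[OF U1(1)] carrier_matD[OF S1] carrier_matD[OF F] carrier_matD[OF M]
    carrier_matD[OF Ut] carrier_matD[OF St] carrier_matD[OF Wt] carrier_matD[OF T(1)]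
  have G: "G \<in> carrier_mat k k" unfolding G_def using Wt T by simp
  have "op_bound G (1 * (1 / \<delta>))"
    unfolding G_def using op_bound_orthonormal_cols[OF oWt] T(3) dims by (intro op_bound_mult) auto
  then have op_G: "op_bound G (1 / \<delta>)" by simp
  have "M * G = Ut * (St * (Wt\<^sup>T * Wt) * T)"
    unfolding M_eq G_def by (simp add: assoc_mult_mat_dim dims)
  also have "\<dots> = Ut" using oWt T(2) dims unfolding orthonormal_cols_def by simp
  finally have MG: "M * G = Ut" .
  have "Ut - U1 * (U1\<^sup>T * Ut) = (U1 * (S1 * G) + F * G) - U1 * ((U1\<^sup>T * U1) * (S1 * G) + U1\<^sup>T * (F * G))"
    unfolding MG[symmetric] M_def using carrier_matD[OF G]
    by (simp add: add_mult_distrib_mat_dim mult_add_distrib_mat_dim assoc_mult_mat_dim dims)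
  also have "\<dots> = F * G - U1 * (U1\<^sup>T * (F * G))"
    using U1(2) carrier_matD[OF G] dims unfolding orthonormal_cols_def
    by (simp add: mult_add_distrib_mat_dim assoc_mult_mat_dim add_diff_add_mat_cancel)
  finally show ?thesis using that G op_G by blast
qed

(* A single outcome E of the event, with hypotheses (i)-(iv) as in the theorem. *)
locale noise_event =
  fixes m1 m2 r rb :: nat and Us Vs E Ut St Wt :: "real mat" and sig :: "nat \<Rightarrow> real"
    and \<omega> L \<mu> C5 C3 \<rho> :: real
  assumes rank: "1 \<le> r" "r \<le> m1" "rb \<le> r"
    and Us: "Us \<in> carrier_mat m1 r" and Vs: "Vs \<in> carrier_mat m2 r" and E: "E \<in> carrier_mat m1 m2"
    and orthonormal_Us: "orthonormal_cols Us"
    and sig_antimono: "\<forall>i j. 1 \<le> i \<and> i \<le> j \<and> j \<le> r \<longrightarrow> sig j \<le> sig i"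
    and sig_r: "0 \<le> sig r" and sig_beyond: "sig (r + 1) = 0"
    and \<omega>: "0 \<le> \<omega>" and L: "0 \<le> L" and \<mu>: "0 \<le> \<mu>" and C5: "1 \<le> C5" and C3: "C3 = 10 * C5"
    and \<rho>: "\<rho> = C3 * (sqrt (real m1 * real m2) + real m1) * \<omega>\<^sup>2 * L\<^sup>2"
    and svd: "is_svd (col_block Us 0 rb * sig_block sig 0 rb + E * col_block Vs 0 rb) Ut St Wt"
    and offdiag_powers: "\<forall>k::nat. real k \<le> L \<longrightarrow>
         norm_2inf ((offdiag (E * E\<^sup>T)) ^\<^sub>m k * (E * Vs)) \<le> C3 * sqrt (\<mu> * r) * \<rho> ^ k * \<omega> * L \<and>
         norm_2inf ((offdiag (E * E\<^sup>T)) ^\<^sub>m k * Us) \<le> C3 * sqrt (\<mu> * r / m1) * \<rho> ^ k"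
    and sv_perturbation: "\<forall>i \<in> {1..rb}. \<bar>St $$ (i - 1, i - 1) - sig i\<bar> \<le> spec_norm (E * col_block Vs 0 rb)"
    and EV1_le_EV: "spec_norm (E * col_block Vs 0 rb) \<le> spec_norm (E * Vs)"
    and EV_small: "spec_norm (E * Vs) \<le> sqrt C5 * sqrt (real m1) * \<omega> * L"
    and Z3_small: "spec_norm (Z3 Vs E) \<le> 3 * C5 * (sqrt (real m1 * real m2) + real m1) * \<omega>\<^sup>2 * L\<^sup>2"
    and subspace: "norm_2inf (col_block Us 0 rb * (col_block Us 0 rb)\<^sup>T * Ut - Ut)
                     \<le> 4 * C5 * sqrt (\<mu> * r) * \<omega> * L / sig r"
    and subspace_small: "4 * C5 * sqrt (\<mu> * r) * \<omega> * L / sig r \<le> sqrt (\<mu> * r / m1)"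
begin

(* By (ii), epsilon bounds the operator norm of E V; by (i), alpha and eta are the row scales of U and E V. *)
abbreviation "\<nu> \<equiv> sqrt (real m1) * \<omega> * L"
abbreviation "\<epsilon> \<equiv> sqrt C5 * \<nu>"
abbreviation "\<alpha> \<equiv> C3 * sqrt (\<mu> * r / m1)"
abbreviation "\<eta> \<equiv> C3 * sqrt (\<mu> * r) * \<omega> * L"
abbreviation "EV \<equiv> E * Vs"
abbreviation "offEE \<equiv> offdiag (E * E\<^sup>T)"
abbreviation "Z \<equiv> Z3 Vs E"
abbreviation "sel1 \<equiv> col_sel 0 rb r"
abbreviation "sel2 \<equiv> col_sel rb r r"
abbreviation "U1 \<equiv> col_block Us 0 rb"
abbreviation "U2 \<equiv> col_block Us rb r"
abbreviation "V1 \<equiv> col_block Vs 0 rb"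
abbreviation "V2 \<equiv> col_block Vs rb r"
abbreviation "S2 \<equiv> sig_block sig rb r"
abbreviation "R \<equiv> Ut - U1 * (U1\<^sup>T * Ut)"

lemma constants_nonneg: "0 \<le> \<nu>" "0 \<le> \<epsilon>" "0 \<le> C3" "0 \<le> \<alpha>" "0 \<le> \<eta>" "0 \<le> \<rho>"
  using \<omega> L \<mu> C5 C3 by (auto simp: \<rho>)

lemma eta_eq: "\<eta> = \<alpha> * \<nu>"
proof -
  have "sqrt (\<mu> * r) = sqrt (\<mu> * r / m1) * sqrt m1" using rank by (simp add: real_sqrt_mult[symmetric])
  then show ?thesis by (simp add: mult_ac)
qed

lemma sqrt_C5_le: "sqrt C5 \<le> C5"
  using C5 real_sqrt_le_mono[of C5 "C5 * C5"] by (simp add: mult_le_cancel_left1)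

lemma eps_le: "\<epsilon> \<le> C5 * \<nu>"
  using sqrt_C5_le constants_nonneg(1) by (rule mult_right_mono)

lemma eps_sq: "\<epsilon> * \<epsilon> = C5 * \<nu>\<^sup>2"
  using C5 by (simp add: power2_eq_square[symmetric] power_mult_distrib)

lemma rho_eq: "\<rho> = 10 * (C5 * ((sqrt (real m1 * real m2) + real m1) * \<omega>\<^sup>2 * L\<^sup>2))"
  by (simp add: \<rho> C3 mult.assoc)

lemma rho_lower: "10 * (C5 * \<nu>\<^sup>2) \<le> \<rho>"
proof -
  have "\<nu>\<^sup>2 = real m1 * \<omega>\<^sup>2 * L\<^sup>2" by (simp add: power_mult_distrib)
  also have "\<dots> \<le> (sqrt (real m1 * real m2) + real m1) * \<omega>\<^sup>2 * L\<^sup>2" by (intro mult_right_mono) auto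
  finally show ?thesis unfolding rho_eq using C5 by simp
qed

lemma carriers:
  "EV \<in> carrier_mat m1 r" "offEE \<in> carrier_mat m1 m1" "Z \<in> carrier_mat m1 m1"
  "U1 \<in> carrier_mat m1 rb" "U2 \<in> carrier_mat m1 (r - rb)" "V1 \<in> carrier_mat m2 rb" "V2 \<in> carrier_mat m2 (r - rb)"
  "S2 \<in> carrier_mat (r - rb) (r - rb)" "Ut \<in> carrier_mat m1 rb"
proof -
  show "EV \<in> carrier_mat m1 r" "offEE \<in> carrier_mat m1 m1" "Z \<in> carrier_mat m1 m1"
    using E Vs by (auto simp: offdiag_def Z3_def)
  show "U1 \<in> carrier_mat m1 rb" "U2 \<in> carrier_mat m1 (r - rb)" "V1 \<in> carrier_mat m2 rb"
    "V2 \<in> carrier_mat m2 (r - rb)" "S2 \<in> carrier_mat (r - rb) (r - rb)"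
    using Us Vs by (auto simp: col_block_def sig_block_def)
  define M where "M = U1 * sig_block sig 0 rb + E * V1"
  have "M \<in> carrier_mat m1 rb"
    unfolding M_def using \<open>U1 \<in> carrier_mat m1 rb\<close> \<open>V1 \<in> carrier_mat m2 rb\<close> E
    by (auto simp: sig_block_def)
  moreover have "is_svd M Ut St Wt" unfolding M_def by (rule svd)
  ultimately show "Ut \<in> carrier_mat m1 rb" unfolding is_svd_def by auto
qed

lemmas dims = carrier_matD[OF Us] carrier_matD[OF Vs] carrier_matD[OF E]
  carrier_matD[OF carriers(1)] carrier_matD[OF carriers(2)] carrier_matD[OF carriers(3)]
  carrier_matD[OF carriers(4)] carrier_matD[OF carriers(5)] carrier_matD[OF carriers(6)]
  carrier_matD[OF carriers(7)] carrier_matD[OF carriers(8)] carrier_matD[OF carriers(9)]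

lemma col_blocks_eq:
  "U1 = Us * sel1" "U2 = Us * sel2" "V2 = Vs * sel2" "E * V1 = EV * sel1" "E * V2 = EV * sel2"
proof -
  show "U1 = Us * sel1" "U2 = Us * sel2" using Us rank by (auto intro: col_block_eq_mult_col_sel)
  have "V1 = Vs * sel1" "V2 = Vs * sel2" using Vs rank by (auto intro: col_block_eq_mult_col_sel)
  then show "V2 = Vs * sel2" "E * V1 = EV * sel1" "E * V2 = EV * sel2"
    by (simp_all add: assoc_mult_mat_dim dims)
qed

lemma col_blocks_orthonormal: "orthonormal_cols U1" "orthonormal_cols U2" "U2\<^sup>T * U1 = 0\<^sub>m (r - rb) rb"
proof -
  show "orthonormal_cols U1" "orthonormal_cols U2"
    unfolding col_blocks_eq using orthonormal_Us orthonormal_cols_col_sel[OF rank(3)]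
      orthonormal_cols_col_sel[of r r rb] dims
    by (simp_all add: orthonormal_cols_mult)
  have "U2\<^sup>T * U1 = sel2\<^sup>T * ((Us\<^sup>T * Us) * sel1)"
    unfolding col_blocks_eq by (simp add: transpose_mult_dim assoc_mult_mat_dim dims)
  also have "\<dots> = 0\<^sub>m (r - rb) rb"
    using orthonormal_Us transpose_col_sel_mult_col_sel_disjoint[of rb rb r r 0] dims
    unfolding orthonormal_cols_def by simp
  finally show "U2\<^sup>T * U1 = 0\<^sub>m (r - rb) rb" .
qed

lemma op_bound_col_sel: "op_bound sel1 1" "op_bound sel2 1"
  using rank by (auto intro: op_bound_orthonormal_cols orthonormal_cols_col_sel)

lemma Z_eq: "Z = offEE + diag_part (EV * EV\<^sup>T) - EV * EV\<^sup>T"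
proof -
  have "E * Vs * Vs\<^sup>T * E\<^sup>T = EV * EV\<^sup>T" by (simp add: assoc_mult_mat_dim transpose_mult_dim dims)
  then show ?thesis unfolding Z3_def using E carriers(1) by (simp add: offdiag_diff[of _ m1])
qed

lemma offEE_eq: "offEE = Z + EV * EV\<^sup>T - diag_part (EV * EV\<^sup>T)"
  unfolding Z_eq using carriers(1,2) by (intro eq_matI) (auto simp: diag_part_def)

lemma op_bound_EV: "op_bound EV \<epsilon>"
  using EV_small by (intro op_bound_if_spec_norm_le) (simp add: mult_ac)

lemma op_bounds_Z: "op_bound Z (3 / 10 * \<rho>)" "op_bound Z (\<rho> / 2)"
proof -
  show Z: "op_bound Z (3 / 10 * \<rho>)"
    using Z3_small by (intro op_bound_if_spec_norm_le) (simp add: rho_eq mult_ac)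
  show "op_bound Z (\<rho> / 2)" using constants_nonneg by (intro op_bound_mono[OF Z]) simp
qed

lemma row_bounds_EV: "row_bound EV \<epsilon>" "row_bound EV \<eta>"
proof -
  show "row_bound EV \<epsilon>" using row_bound_if_op_bound[OF op_bound_EV constants_nonneg(2)] .
  have "norm_2inf (offEE ^\<^sub>m 0 * EV) \<le> \<eta>" using conjunct1[OF offdiag_powers[rule_format, of 0]] L by simp
  moreover have "offEE ^\<^sub>m 0 * EV = EV" using dims by simp
  ultimately show "row_bound EV \<eta>" using constants_nonneg by (simp add: norm_2inf_le_iff)
qed

lemma op_bounds_diag_part: "op_bound (diag_part (EV * EV\<^sup>T)) (\<epsilon> * \<epsilon>)"
  "op_bound (diag_part (EV * EV\<^sup>T)) (\<eta> * \<epsilon>)"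
  using row_bounds_EV by (auto intro: op_bound_diag_part_gram)

lemma op_bound_offEE: "op_bound offEE (\<rho> / 2)"
proof -
  have P: "op_bound (EV * EV\<^sup>T) (\<epsilon> * \<epsilon>)"
    using op_bound_mult[OF _ op_bound_EV op_bound_transpose[OF op_bound_EV]] constants_nonneg by simp
  have "op_bound offEE (3 / 10 * \<rho> + \<epsilon> * \<epsilon> + \<epsilon> * \<epsilon>)"
    unfolding offEE_eq using dims
    by (intro op_bound_diff op_bound_add op_bounds_Z(1) P op_bounds_diag_part(1)) (simp_all add: diag_part_def)
  then show ?thesis by (rule op_bound_mono) (use rho_lower eps_sq in linarith)
qed

lemma rows_offEE_pow:
  assumes "real j \<le> L"
  shows "row_bound (offEE ^\<^sub>m j * Us) (\<alpha> * \<rho> ^ j)" "row_bound (offEE ^\<^sub>m j * EV) (\<eta> * \<rho> ^ j)"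
proof -
  have "norm_2inf (offEE ^\<^sub>m j * Us) \<le> \<alpha> * \<rho> ^ j" "norm_2inf (offEE ^\<^sub>m j * EV) \<le> \<eta> * \<rho> ^ j"
    using offdiag_powers assms by (auto simp: mult_ac)
  moreover have "0 \<le> \<alpha> * \<rho> ^ j" "0 \<le> \<eta> * \<rho> ^ j" using constants_nonneg by simp_all
  ultimately show "row_bound (offEE ^\<^sub>m j * Us) (\<alpha> * \<rho> ^ j)" "row_bound (offEE ^\<^sub>m j * EV) (\<eta> * \<rho> ^ j)"
    by (simp_all add: norm_2inf_le_iff)
qed

lemma eta_eps_le: "\<eta> * \<epsilon> \<le> \<alpha> * \<rho> / 10"
proof -
  have "\<eta> * \<epsilon> = \<alpha> * (sqrt C5 * \<nu>\<^sup>2)" unfolding eta_eq by (simp add: power2_eq_square mult_ac)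
  also have "\<dots> \<le> \<alpha> * (C5 * \<nu>\<^sup>2)"
    using sqrt_C5_le constants_nonneg by (intro mult_left_mono mult_right_mono) auto
  also have "\<dots> \<le> \<alpha> * \<rho> / 10"
    using mult_left_mono[OF rho_lower constants_nonneg(4)] by (simp add: field_simps)
  finally show ?thesis .
qed

lemma small_perturbation: "\<eta> * \<epsilon> * 1 \<le> \<alpha> * \<rho> / 4" "\<eta> * \<epsilon> * \<epsilon> \<le> \<eta> * \<rho> / 4"
proof -
  have "0 \<le> \<alpha> * \<rho>" using constants_nonneg by simp
  then show "\<eta> * \<epsilon> * 1 \<le> \<alpha> * \<rho> / 4" using eta_eps_le by simp
  have "\<epsilon> * \<epsilon> \<le> \<rho> / 4" using eps_sq rho_lower constants_nonneg(6) by linarith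
  from mult_left_mono[OF this constants_nonneg(5)]
  show "\<eta> * \<epsilon> * \<epsilon> \<le> \<eta> * \<rho> / 4" by (simp only: mult.assoc times_divide_eq_right)
qed

lemma row_bounds_Z_pow:
  assumes "real i \<le> L"
  shows "row_bound (Z ^\<^sub>m i * Us) (2 * \<alpha> * \<rho> ^ i)" "row_bound (Z ^\<^sub>m i * EV) (2 * \<eta> * \<rho> ^ i)"
proof -
  have rows: "row_bound (offEE ^\<^sub>m j * Us) (\<alpha> * \<rho> ^ j)" "row_bound (offEE ^\<^sub>m j * EV) (\<eta> * \<rho> ^ j)"
    if "j \<le> i" for j
    using rows_offEE_pow that assms by (meson of_nat_le_iff order_trans)+
  have D: "diag_part (EV * EV\<^sup>T) \<in> carrier_mat m1 m1" by (simp add: diag_part_def dims)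
  note perturbed = row_bound_pow_perturbed[where N = i, OF carriers(2) D carriers(1) _ Z_eq constants_nonneg(6)
      op_bound_offEE op_bounds_Z(2) op_bounds_diag_part(2) op_bound_EV]
  have d: "0 \<le> \<eta> * \<epsilon>" using constants_nonneg by simp
  show "row_bound (Z ^\<^sub>m i * Us) (2 * \<alpha> * \<rho> ^ i)"
    using perturbed[OF Us op_bound_orthonormal_cols[OF orthonormal_Us] d constants_nonneg(2) zero_le_one
        rows small_perturbation(1) small_perturbation(1) constants_nonneg(4) order_refl] .
  show "row_bound (Z ^\<^sub>m i * EV) (2 * \<eta> * \<rho> ^ i)"
    using perturbed[OF carriers(1) op_bound_EV d constants_nonneg(2) constants_nonneg(2)
        rows(2) rows(2) small_perturbation(2) small_perturbation(2) constants_nonneg(5) order_refl] .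
qed

lemma Ut_orthonormal: "orthonormal_cols Ut"
  using svd unfolding is_svd_def by auto

(* When sig r = 0, the bound in (iv) is 0 because x / 0 = 0, which forces tilde U into the span of U1. *)
lemma residual_zero_or_gap: "R = 0\<^sub>m m1 rb \<or> (0 < sig r \<and> 4 * C5 * \<nu> \<le> sig r)"
proof (cases "4 * C5 * sqrt (\<mu> * r) * \<omega> * L / sig r \<le> 0")
  case True
  then have "norm_2inf (U1 * U1\<^sup>T * Ut - Ut) \<le> 0" using subspace by linarith
  then have zero: "U1 * U1\<^sup>T * Ut - Ut = 0\<^sub>m m1 rb"
    using norm_2inf_le_0_imp_zero by (fastforce simp: dims)
  have "R = 0\<^sub>m m1 rb"
  proof (rule eq_matI)
    fix p q assume "p < dim_row (0\<^sub>m m1 rb)" "q < dim_col (0\<^sub>m m1 rb)"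
    then have pq: "p < m1" "q < rb" by auto
    have "(U1 * U1\<^sup>T * Ut - Ut) $$ (p, q) = 0" using zero pq by simp
    moreover have "U1 * U1\<^sup>T * Ut = U1 * (U1\<^sup>T * Ut)" by (simp add: assoc_mult_mat_dim dims)
    ultimately show "R $$ (p, q) = 0\<^sub>m m1 rb $$ (p, q)" using pq by (simp add: dims)
  qed (simp_all add: dims)
  then show ?thesis ..
next
  case False
  then have pos: "0 < 4 * C5 * sqrt (\<mu> * r) * \<omega> * L / sig r" by simp
  then have sig_pos: "0 < sig r" using sig_r by (cases "sig r = 0") auto
  then have "0 < 4 * C5 * sqrt (\<mu> * r) * \<omega> * L" using pos by (simp add: zero_less_divide_iff)
  then have sqrt_pos: "0 < sqrt (\<mu> * r)" using C5 \<omega> L \<mu> by (simp add: zero_less_mult_iff)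
  have "4 * C5 * sqrt (\<mu> * r) * \<omega> * L \<le> sqrt (\<mu> * r / m1) * sig r"
    using subspace_small sig_pos by (simp add: divide_le_eq)
  then have "(4 * C5 * sqrt (\<mu> * r) * \<omega> * L) * sqrt m1 \<le> (sqrt (\<mu> * r / m1) * sig r) * sqrt m1"
    by (rule mult_right_mono) simp
  moreover have "sqrt (\<mu> * r / m1) * sqrt m1 = sqrt (\<mu> * r)"
    using rank by (simp add: real_sqrt_mult[symmetric])
  ultimately have "sqrt (\<mu> * r) * (4 * C5 * \<nu>) \<le> sqrt (\<mu> * r) * sig r" by (simp add: mult_ac)
  then show ?thesis using sqrt_pos sig_pos by simp
qed

lemma sig_antimono_upto_succ:
  assumes "1 \<le> i" "i \<le> j" "j \<le> r + 1"
  shows "sig j \<le> sig i"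
proof (cases "j \<le> r")
  case True
  then show ?thesis using sig_antimono assms by blast
next
  case False
  then have j: "j = r + 1" using assms(3) by simp
  show ?thesis
  proof (cases "i \<le> r")
    case True
    then have "sig r \<le> sig i" using sig_antimono assms(1) by blast
    then show ?thesis using j sig_beyond sig_r by simp
  next
    case False
    then have "i = j" using j assms(2) by linarith
    then show ?thesis by simp
  qed
qed

lemma sig_next_nonneg: "0 \<le> sig (rb + 1)"
  using sig_antimono_upto_succ[of "rb + 1" "r + 1"] sig_beyond rank by simp

definition \<delta> :: real where "\<delta> = max (sig r) (sig (rb + 1)) - \<epsilon>"

lemma St_diag_lower:
  assumes "k < rb"
  shows "\<delta> \<le> St $$ (k, k)"
proof -
  have "Suc k \<in> {1..rb}" using assms by simp
  then have "\<bar>St $$ (Suc k - 1, Suc k - 1) - sig (Suc k)\<bar> \<le> spec_norm (E * V1)"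
    using sv_perturbation by blast
  then have "sig (Suc k) - St $$ (k, k) \<le> \<epsilon>" using EV1_le_EV EV_small by (simp add: mult_ac)
  moreover have "sig r \<le> sig (Suc k)" "sig (rb + 1) \<le> sig (Suc k)"
    using sig_antimono_upto_succ assms rank by simp_all
  ultimately show ?thesis unfolding \<delta>_def by simp
qed

lemma gap_consequences:
  assumes "0 < sig r" "4 * C5 * \<nu> \<le> sig r"
  shows "0 < \<delta>" "(1 + sqrt C5) * \<nu> \<le> \<delta>" "sig (rb + 1) \<le> 2 * \<delta>"
proof -
  have "\<nu> \<le> C5 * \<nu>" using C5 constants_nonneg(1) by (simp add: mult_le_cancel_right1)
  moreover have "(1 + sqrt C5) * \<nu> = \<nu> + \<epsilon>" "4 * C5 * \<nu> = 4 * (C5 * \<nu>)"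
    by (simp_all add: distrib_right)
  moreover have "sig r \<le> max (sig r) (sig (rb + 1))" "sig (rb + 1) \<le> max (sig r) (sig (rb + 1))"
    by simp_all
  ultimately have "\<epsilon> \<le> max (sig r) (sig (rb + 1)) / 4" "\<nu> + \<epsilon> \<le> \<delta>" "0 < max (sig r) (sig (rb + 1))"
    unfolding \<delta>_def using assms eps_le by linarith+
  then show "0 < \<delta>" "(1 + sqrt C5) * \<nu> \<le> \<delta>" "sig (rb + 1) \<le> 2 * \<delta>"
    using constants_nonneg(1) \<open>(1 + sqrt C5) * \<nu> = \<nu> + \<epsilon>\<close> unfolding \<delta>_def by auto
qed

lemma op_bound_EV1: "op_bound (E * V1) \<epsilon>"
  using op_bound_mult[OF _ op_bound_EV op_bound_col_sel(1)] constants_nonneg unfolding col_blocks_eq(4)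
  by (simp add: dims)

lemma residual_cases:
  obtains "R = 0\<^sub>m m1 rb"
  | G where "G \<in> carrier_mat rb rb" "op_bound G (1 / \<delta>)" "R = E * V1 * G - U1 * (U1\<^sup>T * (E * V1 * G))"
      "0 < \<delta>" "(1 + sqrt C5) * \<nu> \<le> \<delta>" "sig (rb + 1) \<le> 2 * \<delta>"
  using residual_zero_or_gap
proof
  assume gap: "0 < sig r \<and> 4 * C5 * \<nu> \<le> sig r"
  have "sig_block sig 0 rb \<in> carrier_mat rb rb" "E * V1 \<in> carrier_mat m1 rb"
    using carriers(6) E by (auto simp: sig_block_def)
  from svd_residual_factor[OF carriers(4) col_blocks_orthonormal(1) this svd
      gap_consequences(1)[OF gap[THEN conjunct1] gap[THEN conjunct2]] St_diag_lower]
  show thesis using that(2) gap gap_consequences by blast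
qed (rule that(1))

lemma row_bound_Z_pow_residual:
  assumes i: "real i \<le> L"
  shows "row_bound (Z ^\<^sub>m i * R) (2 * \<alpha> * \<rho> ^ i)"
proof (cases rule: residual_cases)
  case 1
  then show ?thesis using constants_nonneg by (simp add: dims row_bound_zero)
next
  case (2 G)
  note dims_G = carrier_matD[OF 2(1)]
  have "Z ^\<^sub>m i * R = (Z ^\<^sub>m i * EV) * (sel1 * G) - (Z ^\<^sub>m i * Us) * (sel1 * (U1\<^sup>T * (E * V1 * G)))"
    unfolding 2(3) unfolding col_blocks_eq(1,4)
    by (simp add: mult_minus_distrib_mat_dim assoc_mult_mat_dim dims dims_G)
  moreover have "row_bound ((Z ^\<^sub>m i * EV) * (sel1 * G)) (2 * \<eta> * \<rho> ^ i * (1 * (1 / \<delta>)))"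
    using 2(4) dims_G
    by (intro row_bound_mult[OF _ row_bounds_Z_pow(2)[OF i]] op_bound_mult[OF _ op_bound_col_sel(1) 2(2)])
      (simp_all add: dims)
  moreover have "row_bound ((Z ^\<^sub>m i * Us) * (sel1 * (U1\<^sup>T * (E * V1 * G))))
      (2 * \<alpha> * \<rho> ^ i * (1 * (1 * (\<epsilon> * (1 / \<delta>)))))"
    using 2(4) dims_G constants_nonneg
    by (intro row_bound_mult[OF _ row_bounds_Z_pow(1)[OF i]] op_bound_mult[OF _ op_bound_col_sel(1)]
        op_bound_mult[OF _ op_bound_transpose[OF op_bound_orthonormal_cols[OF col_blocks_orthonormal(1)]]]
        op_bound_mult[OF _ op_bound_EV1 2(2)])
      (simp_all add: dims)
  ultimately have "row_bound (Z ^\<^sub>m i * R)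
      (2 * \<eta> * \<rho> ^ i * (1 * (1 / \<delta>)) + 2 * \<alpha> * \<rho> ^ i * (1 * (1 * (\<epsilon> * (1 / \<delta>)))))"
    using dims_G by (simp add: row_bound_diff dims)
  moreover have "2 * \<eta> * \<rho> ^ i * (1 * (1 / \<delta>)) + 2 * \<alpha> * \<rho> ^ i * (1 * (1 * (\<epsilon> * (1 / \<delta>))))
      = (2 * \<alpha> * \<rho> ^ i) * ((1 + sqrt C5) * \<nu> / \<delta>)"
    unfolding eta_eq using 2(4) by (simp add: field_simps)
  moreover have "(2 * \<alpha> * \<rho> ^ i) * ((1 + sqrt C5) * \<nu> / \<delta>) \<le> 2 * \<alpha> * \<rho> ^ i"
    using 2(4,5) constants_nonneg by (intro mult_left_le) auto
  ultimately show ?thesis by (auto elim: row_bound_mono)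
qed

lemma U2_transpose_residual: "U2\<^sup>T * R = U2\<^sup>T * Ut"
proof -
  have "U2\<^sup>T * R = U2\<^sup>T * Ut - (U2\<^sup>T * U1) * (U1\<^sup>T * Ut)"
    by (simp add: mult_minus_distrib_mat_dim assoc_mult_mat_dim dims)
  then show ?thesis unfolding col_blocks_orthonormal(3) by (simp add: minus_zero_mat_dim dims)
qed

lemma op_bound_U2_residual: "\<exists>g \<ge> 0. op_bound (U2\<^sup>T * R) g \<and> sig (rb + 1) * g \<le> 2 * \<epsilon>"
proof (cases rule: residual_cases)
  case 1
  then have "op_bound (U2\<^sup>T * R) 0" by (simp add: dims op_bound_zero)
  then show ?thesis using constants_nonneg by auto
next
  case (2 G)
  note dims_G = carrier_matD[OF 2(1)]
  have "U2\<^sup>T * R = U2\<^sup>T * (E * V1 * G) - (U2\<^sup>T * U1) * (U1\<^sup>T * (E * V1 * G))"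
    unfolding 2(3) by (simp add: mult_minus_distrib_mat_dim assoc_mult_mat_dim dims dims_G)
  also have "\<dots> = U2\<^sup>T * (E * V1 * G)"
    unfolding col_blocks_orthonormal(3) by (simp add: minus_zero_mat_dim dims dims_G)
  finally have "U2\<^sup>T * R = U2\<^sup>T * (E * V1 * G)" .
  moreover have "op_bound (U2\<^sup>T * (E * V1 * G)) (1 * (\<epsilon> * (1 / \<delta>)))"
    using constants_nonneg dims_G
    by (intro op_bound_mult[OF _ op_bound_transpose[OF op_bound_orthonormal_cols[OF col_blocks_orthonormal(2)]]]
        op_bound_mult[OF _ op_bound_EV1 2(2)]) (simp_all add: dims)
  moreover have "sig (rb + 1) * (\<epsilon> / \<delta>) \<le> (2 * \<delta>) * (\<epsilon> / \<delta>)"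
    using 2(4,6) constants_nonneg by (intro mult_right_mono) auto
  ultimately show ?thesis using 2(4) constants_nonneg by (intro exI[of _ "\<epsilon> / \<delta>"]) auto
qed

lemma row_bound_Z_pow_Ut:
  assumes i: "real i \<le> L"
  shows "row_bound (Z ^\<^sub>m i * Ut) (4 * \<alpha> * \<rho> ^ i)"
proof -
  have "Ut = U1 * (U1\<^sup>T * Ut) + R" by (intro eq_matI) (simp_all add: dims)
  then have "Z ^\<^sub>m i * Ut = Z ^\<^sub>m i * (U1 * (U1\<^sup>T * Ut) + R)" by (rule arg_cong)
  also have "\<dots> = Z ^\<^sub>m i * (U1 * (U1\<^sup>T * Ut)) + Z ^\<^sub>m i * R"
    by (rule mult_add_distrib_mat_dim) (simp_all add: dims)
  also have "Z ^\<^sub>m i * (U1 * (U1\<^sup>T * Ut)) = (Z ^\<^sub>m i * Us) * (sel1 * (U1\<^sup>T * Ut))"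
    unfolding col_blocks_eq(1) by (simp add: assoc_mult_mat_dim dims)
  finally have split: "Z ^\<^sub>m i * Ut = (Z ^\<^sub>m i * Us) * (sel1 * (U1\<^sup>T * Ut)) + Z ^\<^sub>m i * R" .
  have first: "row_bound ((Z ^\<^sub>m i * Us) * (sel1 * (U1\<^sup>T * Ut))) (2 * \<alpha> * \<rho> ^ i * (1 * (1 * 1)))"
    by (intro row_bound_mult[OF _ row_bounds_Z_pow(1)[OF i]] op_bound_mult[OF _ op_bound_col_sel(1)]
        op_bound_mult[OF _ op_bound_transpose[OF op_bound_orthonormal_cols[OF col_blocks_orthonormal(1)]]
          op_bound_orthonormal_cols[OF Ut_orthonormal]]) (simp_all add: dims)
  have "row_bound (Z ^\<^sub>m i * Ut) (2 * \<alpha> * \<rho> ^ i * (1 * (1 * 1)) + 2 * \<alpha> * \<rho> ^ i)"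
    unfolding split by (rule row_bound_add[OF _ _ first row_bound_Z_pow_residual[OF i]]) (simp_all add: dims)
  then show ?thesis by (rule row_bound_mono) simp
qed

lemma op_bound_S2: "op_bound S2 (sig (rb + 1))"
proof (rule op_bound_diagonal)
  show "diagonal_mat S2" "dim_row S2 = dim_col S2" by (auto simp: sig_block_def diagonal_mat_def)
  fix p assume "p < dim_row S2"
  then have p: "p < r - rb" by (simp add: sig_block_def)
  have "0 \<le> sig (p + rb + 1)" "sig (p + rb + 1) \<le> sig (rb + 1)"
    using sig_antimono_upto_succ[of "p + rb + 1" "r + 1"] sig_antimono_upto_succ[of "rb + 1" "p + rb + 1"]
      sig_beyond p by simp_all
  then show "\<bar>S2 $$ (p, p)\<bar> \<le> sig (rb + 1)" using p by (simp add: sig_block_def)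
qed

lemma Z_pow_Z1_eq:
  "Z ^\<^sub>m i * Z1 Us Vs sig r rb E = (Z ^\<^sub>m i * Us) * (sel2 * (S2 * (E * V2)\<^sup>T))
     + (Z ^\<^sub>m i * EV) * (sel2 * (S2 * U2\<^sup>T)) + (Z ^\<^sub>m i * EV) * (sel2 * (E * V2)\<^sup>T)"
proof -
  have "U2 * S2 * V2\<^sup>T * E\<^sup>T = Us * (sel2 * (S2 * (E * V2)\<^sup>T))"
    unfolding col_blocks_eq(2) by (simp add: assoc_mult_mat_dim transpose_mult_dim dims)
  moreover have "E * V2 * S2 * U2\<^sup>T = EV * (sel2 * (S2 * U2\<^sup>T))"
    unfolding col_blocks_eq(5) by (simp add: assoc_mult_mat_dim dims)
  moreover have "E * V2 * V2\<^sup>T * E\<^sup>T = EV * (sel2 * (E * V2)\<^sup>T)"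
    unfolding col_blocks_eq(3) by (simp add: assoc_mult_mat_dim transpose_mult_dim dims)
  ultimately show ?thesis unfolding Z1_def Let_def
    by (simp add: mult_add_distrib_mat_dim assoc_mult_mat_dim dims)
qed

lemma row_bound_Z_pow_Z1:
  assumes i: "real i \<le> L"
  shows "row_bound (Z ^\<^sub>m i * Z1 Us Vs sig r rb E)
    (2 * \<rho> ^ i * (\<alpha> * sig (rb + 1) * \<epsilon> + \<eta> * sig (rb + 1) + \<eta> * \<epsilon>))"
proof -
  have op_EV2: "op_bound (E * V2)\<^sup>T \<epsilon>"
    using op_bound_mult[OF _ op_bound_EV op_bound_col_sel(2)] constants_nonneg unfolding col_blocks_eq(5)
    by (intro op_bound_transpose) (simp_all add: dims)
  have "row_bound (Z ^\<^sub>m i * Z1 Us Vs sig r rb E) (2 * \<alpha> * \<rho> ^ i * (1 * (sig (rb + 1) * \<epsilon>))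
      + 2 * \<eta> * \<rho> ^ i * (1 * (sig (rb + 1) * 1)) + 2 * \<eta> * \<rho> ^ i * (1 * \<epsilon>))"
    unfolding Z_pow_Z1_eq using sig_next_nonneg constants_nonneg
    by (intro row_bound_add row_bound_mult[OF _ row_bounds_Z_pow(1)[OF i]]
        row_bound_mult[OF _ row_bounds_Z_pow(2)[OF i]] op_bound_mult[OF _ op_bound_col_sel(2)]
        op_bound_mult[OF _ op_bound_S2] op_EV2
        op_bound_transpose[OF op_bound_orthonormal_cols[OF col_blocks_orthonormal(2)]]) (simp_all add: dims)
  then show ?thesis by (rule row_bound_mono) (simp add: algebra_simps)
qed

lemma norm_2inf_Z_pow_Z1:
  assumes i: "real i \<le> L"
  shows "norm_2inf (Z ^\<^sub>m i * Z1 Us Vs sig r rb E)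
    \<le> 20 * C3 * C5 * sqrt (\<mu> * r) * (sig (rb + 1) + sqrt (real m1) * \<omega> * L) * \<rho> ^ i * \<omega> * L"
proof -
  let ?\<sigma> = "sig (rb + 1)"
  have \<sigma>: "0 \<le> ?\<sigma>" by (rule sig_next_nonneg)
  have "2 * (sqrt C5 * ?\<sigma>) + 2 * ?\<sigma> + 2 * (sqrt C5 * \<nu>) \<le> 20 * C5 * (?\<sigma> + \<nu>)"
    using mult_right_mono[OF sqrt_C5_le \<sigma>] mult_right_mono[OF sqrt_C5_le constants_nonneg(1)]
      mult_right_mono[OF C5 \<sigma>] mult_right_mono[OF C5 constants_nonneg(1)] \<sigma> constants_nonneg(1)
    by (simp add: distrib_left)
  then have "(\<eta> * \<rho> ^ i) * (2 * (sqrt C5 * ?\<sigma>) + 2 * ?\<sigma> + 2 * (sqrt C5 * \<nu>))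
      \<le> (\<eta> * \<rho> ^ i) * (20 * C5 * (?\<sigma> + \<nu>))"
    using constants_nonneg by (intro mult_left_mono) auto
  then have "2 * \<rho> ^ i * (\<alpha> * ?\<sigma> * \<epsilon> + \<eta> * ?\<sigma> + \<eta> * \<epsilon>) \<le> (\<eta> * \<rho> ^ i) * (20 * C5 * (?\<sigma> + \<nu>))"
    unfolding eta_eq by (simp add: algebra_simps)
  with row_bound_Z_pow_Z1[OF i] have "row_bound (Z ^\<^sub>m i * Z1 Us Vs sig r rb E) ((\<eta> * \<rho> ^ i) * (20 * C5 * (?\<sigma> + \<nu>)))"
    by (rule row_bound_mono)
  moreover have "0 \<le> (\<eta> * \<rho> ^ i) * (20 * C5 * (?\<sigma> + \<nu>))" using constants_nonneg \<sigma> C5 by simp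
  ultimately have "norm_2inf (Z ^\<^sub>m i * Z1 Us Vs sig r rb E) \<le> (\<eta> * \<rho> ^ i) * (20 * C5 * (?\<sigma> + \<nu>))"
    by (simp add: norm_2inf_le_iff)
  then show ?thesis by (simp add: mult_ac)
qed

lemma Z_pow_Z2_eq:
  "Z ^\<^sub>m i * Z2 Us sig r rb Ut = (Z ^\<^sub>m i * Ut) * ((Ut\<^sup>T * U2) * (S2 * (S2 * (U2\<^sup>T * proj_perp Ut))))
     + (Z ^\<^sub>m i * Us) * (sel2 * (S2 * (S2 * ((U2\<^sup>T * Ut) * Ut\<^sup>T))))"
proof -
  have P: "proj_perp Ut \<in> carrier_mat m1 m1" unfolding proj_perp_def using carriers(9) by auto
  show ?thesis unfolding Z2_def Let_def proj_def col_blocks_eq(2)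
    by (simp add: mult_add_distrib_mat_dim assoc_mult_mat_dim transpose_mult_dim dims carrier_matD[OF P])
qed

lemma row_bound_Z_pow_Z2:
  assumes i: "real i \<le> L" and g: "0 \<le> g" "op_bound (U2\<^sup>T * Ut) g"
  shows "row_bound (Z ^\<^sub>m i * Z2 Us sig r rb Ut) (10 * (\<alpha> * \<rho> ^ i) * sig (rb + 1) * (sig (rb + 1) * g))"
proof -
  have op_gt: "op_bound (Ut\<^sup>T * U2) g"
    using op_bound_transpose[OF g(2,1)] by (simp add: transpose_mult_dim dims)
  have op_Ut: "op_bound Ut 1" by (rule op_bound_orthonormal_cols[OF Ut_orthonormal])
  have op_perp: "op_bound (proj_perp Ut) (1 + 1 * 1)"
    unfolding proj_perp_def
    by (intro op_bound_diff op_bound_one op_bound_mult[OF _ op_Ut op_bound_transpose[OF op_Ut]]) (simp_all add: dims)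
  have "row_bound (Z ^\<^sub>m i * Z2 Us sig r rb Ut) (4 * \<alpha> * \<rho> ^ i * (g * (sig (rb + 1) * (sig (rb + 1) * (1 * (1 + 1 * 1)))))
      + 2 * \<alpha> * \<rho> ^ i * (1 * (sig (rb + 1) * (sig (rb + 1) * (g * 1)))))"
    unfolding Z_pow_Z2_eq using sig_next_nonneg g(1)
    by (intro row_bound_add row_bound_mult[OF _ row_bound_Z_pow_Ut[OF i]] row_bound_mult[OF _ row_bounds_Z_pow(1)[OF i]]
        op_bound_mult[OF _ op_gt] op_bound_mult[OF _ op_bound_col_sel(2)] op_bound_mult[OF _ op_bound_S2]
        op_bound_mult[OF _ op_bound_transpose[OF op_bound_orthonormal_cols[OF col_blocks_orthonormal(2)]] op_perp]
        op_bound_mult[OF _ g(2) op_bound_transpose[OF op_Ut]])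
      (simp_all add: dims proj_perp_def)
  then show ?thesis by (rule row_bound_mono) (simp add: algebra_simps)
qed

lemma norm_2inf_Z_pow_Z2:
  assumes i: "real i \<le> L"
  shows "norm_2inf (Z ^\<^sub>m i * Z2 Us sig r rb Ut)
    \<le> 20 * C3 * C5 * sqrt (\<mu> * r) * \<rho> ^ i * \<omega> * sig (rb + 1) * L"
proof -
  let ?\<sigma> = "sig (rb + 1)"
  have \<sigma>: "0 \<le> ?\<sigma>" by (rule sig_next_nonneg)
  obtain g where g: "0 \<le> g" "op_bound (U2\<^sup>T * Ut) g" "?\<sigma> * g \<le> 2 * \<epsilon>"
    using op_bound_U2_residual unfolding U2_transpose_residual by blast
  have "10 * (\<alpha> * \<rho> ^ i) * ?\<sigma> * (?\<sigma> * g) \<le> 10 * (\<alpha> * \<rho> ^ i) * ?\<sigma> * (2 * \<epsilon>)"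
    using g(3) constants_nonneg \<sigma> by (intro mult_left_mono) auto
  also have "\<dots> = 20 * sqrt C5 * (\<eta> * \<rho> ^ i * ?\<sigma>)" unfolding eta_eq by (simp add: algebra_simps)
  also have "\<dots> \<le> 20 * C5 * (\<eta> * \<rho> ^ i * ?\<sigma>)"
    using sqrt_C5_le constants_nonneg \<sigma> by (intro mult_right_mono) auto
  finally have "row_bound (Z ^\<^sub>m i * Z2 Us sig r rb Ut) (20 * C5 * (\<eta> * \<rho> ^ i * ?\<sigma>))"
    using row_bound_Z_pow_Z2[OF i g(1,2)] row_bound_mono by blast
  moreover have "0 \<le> 20 * C5 * (\<eta> * \<rho> ^ i * ?\<sigma>)" using constants_nonneg \<sigma> C5 by simp
  ultimately have "norm_2inf (Z ^\<^sub>m i * Z2 Us sig r rb Ut) \<le> 20 * C5 * (\<eta> * \<rho> ^ i * ?\<sigma>)"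
    by (simp add: norm_2inf_le_iff)
  then show ?thesis by (simp add: mult_ac)
qed

lemma norm_2inf_Z_pow_Us_EV_Ut:
  assumes "real i \<le> L"
  shows "norm_2inf (Z ^\<^sub>m i * Us) \<le> 3 * C3 * sqrt (\<mu> * r / m1) * \<rho> ^ i"
    "norm_2inf (Z ^\<^sub>m i * EV) \<le> 3 * C3 * sqrt (\<mu> * r) * \<rho> ^ i * \<omega> * L"
    "norm_2inf (Z ^\<^sub>m i * Ut) \<le> 4 * C3 * sqrt (\<mu> * r / m1) * \<rho> ^ i"
proof -
  have nonneg: "0 \<le> \<alpha> * \<rho> ^ i" "0 \<le> \<eta> * \<rho> ^ i" using constants_nonneg by simp_all
  have "norm_2inf (Z ^\<^sub>m i * Us) \<le> 2 * \<alpha> * \<rho> ^ i" "norm_2inf (Z ^\<^sub>m i * EV) \<le> 2 * \<eta> * \<rho> ^ i"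
    "norm_2inf (Z ^\<^sub>m i * Ut) \<le> 4 * \<alpha> * \<rho> ^ i"
    by (rule norm_2inf_le[OF _ row_bounds_Z_pow(1)[OF assms]] norm_2inf_le[OF _ row_bounds_Z_pow(2)[OF assms]]
        norm_2inf_le[OF _ row_bound_Z_pow_Ut[OF assms]]; use nonneg in \<open>simp add: mult.assoc\<close>)+
  then show "norm_2inf (Z ^\<^sub>m i * Us) \<le> 3 * C3 * sqrt (\<mu> * r / m1) * \<rho> ^ i"
    "norm_2inf (Z ^\<^sub>m i * EV) \<le> 3 * C3 * sqrt (\<mu> * r) * \<rho> ^ i * \<omega> * L"
    "norm_2inf (Z ^\<^sub>m i * Ut) \<le> 4 * C3 * sqrt (\<mu> * r / m1) * \<rho> ^ i"
    using nonneg by (simp_all add: mult_ac)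
qed

lemma Z3_power_bounds:
  assumes "real i \<le> L"
  shows "norm_2inf (Z ^\<^sub>m i * Us) \<le> 3 * C3 * sqrt (\<mu> * r / m1) * \<rho> ^ i \<and>
    norm_2inf (Z ^\<^sub>m i * (E * Vs)) \<le> 3 * C3 * sqrt (\<mu> * r) * \<rho> ^ i * \<omega> * L \<and>
    norm_2inf (Z ^\<^sub>m i * Ut) \<le> 4 * C3 * sqrt (\<mu> * r / m1) * \<rho> ^ i \<and>
    norm_2inf (Z ^\<^sub>m i * Z1 Us Vs sig r rb E)
      \<le> 20 * C3 * C5 * sqrt (\<mu> * r) * (sig (rb + 1) + sqrt (real m1) * \<omega> * L) * \<rho> ^ i * \<omega> * L \<and>
    norm_2inf (Z ^\<^sub>m i * Z2 Us sig r rb Ut) \<le> 20 * C3 * C5 * sqrt (\<mu> * r) * \<rho> ^ i * \<omega> * sig (rb + 1) * L"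
  using norm_2inf_Z_pow_Us_EV_Ut[OF assms] norm_2inf_Z_pow_Z1[OF assms] norm_2inf_Z_pow_Z2[OF assms] by blast

end

lemma rbar_le: "rbar C0 r m1 m2 \<omega> sig \<le> r"
  unfolding rbar_def Aset_def by (auto intro: Max.boundedI)

lemma incoh_nonneg:
  assumes "1 \<le> m1"
  shows "0 \<le> incoh m1 m2 r U V"
proof -
  have "(vnorm (row U 0))\<^sup>2 \<le> Max {(vnorm (row U i))\<^sup>2 | i. i < m1}"
    using assms by (intro Max_ge) auto
  then have "0 \<le> Max {(vnorm (row U i))\<^sup>2 | i. i < m1}" by (meson order_trans zero_le_power2)
  then show ?thesis unfolding incoh_def by (intro max.coboundedI1) simp
qed

theorem lemma5:
  "\<forall>Cb > (0::real). \<exists>K5. \<forall>C5 \<ge> K5. \<exists>C2 > (0::real). \<exists>C3 > (0::real). \<exists>K0. \<forall>C0 \<ge> K0.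
   \<forall>(M :: 'a measure) (E :: 'a \<Rightarrow> real mat) m1 m2 r (Us :: real mat) (Vs :: real mat)
     (Xs :: real mat) (sig :: nat \<Rightarrow> real) (\<omega> :: real) B.
   let m = max m1 m2; \<mu> = incoh m1 m2 r Us Vs; L = ln (real m);
       rb = rbar C0 r m1 m2 \<omega> sig;
       U1 = col_block Us 0 rb; V1 = col_block Vs 0 rb; S1 = sig_block sig 0 rb;
       \<rho> = C3 * (sqrt (real m1 * real m2) + real m1) * \<omega>\<^sup>2 * L\<^sup>2 in
   prob_space M \<and>
   1 \<le> r \<and> r \<le> m1 \<and> r \<le> m2 \<and>
   Us \<in> carrier_mat m1 r \<and> Vs \<in> carrier_mat m2 r \<and>
   orthonormal_cols Us \<and> orthonormal_cols Vs \<and>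
   (\<forall>i j. 1 \<le> i \<and> i \<le> j \<and> j \<le> r \<longrightarrow> sig j \<le> sig i) \<and> 0 \<le> sig r \<and> sig (r + 1) = 0 \<and>
   Xs = Us * sig_block sig 0 r * Vs\<^sup>T \<and>
   (\<forall>x \<in> space M. E x \<in> carrier_mat m1 m2) \<and>
   (\<forall>i<m1. \<forall>j<m2. (\<lambda>x. E x $$ (i,j)) \<in> borel_measurable M) \<and>
   prob_space.indep_vars M (\<lambda>_. borel) (\<lambda>(i,j) x. E x $$ (i,j)) ({..<m1} \<times> {..<m2}) \<and>
   (\<forall>i<m1. \<forall>j<m2. integrable M (\<lambda>x. (E x $$ (i,j))\<^sup>2) \<and>
                     integral\<^sup>L M (\<lambda>x. E x $$ (i,j)) = 0) \<and>
   0 \<le> \<omega> \<and> \<omega>\<^sup>2 = Max {integral\<^sup>L M (\<lambda>x. (E x $$ (i,j))\<^sup>2) | i j. i < m1 \<and> j < m2} \<and>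
   (\<forall>i<m1. \<forall>j<m2. measure M {x \<in> space M. \<bar>E x $$ (i,j)\<bar> > B} \<le> real m powr (-12)) \<and>
   B \<le> Cb * \<omega> * min ((real m1 * real m2) powr (1/4)) (sqrt (real m2)) / L
   \<longrightarrow>
   (\<forall>x \<in> space M. \<forall>Ut St Wt.
      is_svd (U1 * S1 + E x * V1) Ut St Wt \<and>
      \<comment> \<open>(i)\<close>
      (\<forall>k::nat. real k \<le> L \<longrightarrow>
         norm_2inf ((offdiag (E x * (E x)\<^sup>T)) ^\<^sub>m k * (E x * Vs))
           \<le> C3 * sqrt (\<mu> * r) * \<rho> ^ k * \<omega> * L \<and>
         norm_2inf ((offdiag (E x * (E x)\<^sup>T)) ^\<^sub>m k * Us)
           \<le> C3 * sqrt (\<mu> * r / m1) * \<rho> ^ k) \<and>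
      \<comment> \<open>(ii)\<close>
      (\<forall>i \<in> {1..rb}. \<bar>St $$ (i - 1, i - 1) - sig i\<bar> \<le> spec_norm (E x * V1)) \<and>
      spec_norm (E x * V1) \<le> spec_norm (E x * Vs) \<and>
      spec_norm (E x * Vs) \<le> sqrt C5 * sqrt (real m1) * \<omega> * L \<and>
      \<comment> \<open>(iii)\<close>
      spec_norm (Z3 Vs (E x)) \<le> 3 * C5 * (sqrt (real m1 * real m2) + real m1) * \<omega>\<^sup>2 * L\<^sup>2 \<and>
      \<comment> \<open>(iv)\<close>
      norm_2inf (U1 * U1\<^sup>T * Ut - Ut) \<le> 4 * C5 * sqrt (\<mu> * r) * \<omega> * L / sig r \<and>
      4 * C5 * sqrt (\<mu> * r) * \<omega> * L / sig r \<le> sqrt (\<mu> * r / m1) \<and>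
      \<comment> \<open>(v)\<close>
      norm_2inf Ut \<le> 2 * sqrt (\<mu> * r / m1)
      \<longrightarrow>
      (\<forall>i::nat. real i \<le> L \<longrightarrow>
         norm_2inf ((Z3 Vs (E x)) ^\<^sub>m i * Us) \<le> 3 * C3 * sqrt (\<mu> * r / m1) * \<rho> ^ i \<and>
         norm_2inf ((Z3 Vs (E x)) ^\<^sub>m i * (E x * Vs)) \<le> 3 * C3 * sqrt (\<mu> * r) * \<rho> ^ i * \<omega> * L \<and>
         norm_2inf ((Z3 Vs (E x)) ^\<^sub>m i * Ut) \<le> 4 * C3 * sqrt (\<mu> * r / m1) * \<rho> ^ i \<and>
         norm_2inf ((Z3 Vs (E x)) ^\<^sub>m i * Z1 Us Vs sig r rb (E x))
           \<le> C2 * sqrt (\<mu> * r) * (sig (rb + 1) + sqrt (real m1) * \<omega> * L) * \<rho> ^ i * \<omega> * L \<and>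
         norm_2inf ((Z3 Vs (E x)) ^\<^sub>m i * Z2 Us sig r rb Ut)
           \<le> C2 * sqrt (\<mu> * r) * \<rho> ^ i * \<omega> * sig (rb + 1) * L))"
  \<comment> \<open>C0 enters only through rbar, and the bounds hold for every rbar \<le> r.\<close>
  unfolding Let_def
  apply (intro allI impI)
  apply (rule exI[of _ "1::real"])
  apply (intro allI impI)
  subgoal for Cb C5
    apply (rule exI[of _ "20 * (10 * C5) * C5"], rule conjI, simp)
    apply (rule exI[of _ "10 * C5"], rule conjI, simp)
    apply (intro exI[of _ "0::real"] allI impI ballI)
    subgoal premises prems for C0 M E m1 m2 r Us Vs Xs sig \<omega> B x Ut St Wt i
    proof -
      interpret noise_event m1 m2 r "rbar C0 r m1 m2 \<omega> sig" Us Vs "E x" Ut St Wt sig \<omega>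
        "ln (real (max m1 m2))" "incoh m1 m2 r Us Vs" C5 "10 * C5"
        "10 * C5 * (sqrt (real m1 * real m2) + real m1) * \<omega>\<^sup>2 * (ln (real (max m1 m2)))\<^sup>2"
        using prems by unfold_locales (auto simp: rbar_le incoh_nonneg)
      show ?thesis using Z3_power_bounds prems by simp
    qed
    done
  done

end
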